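(* Assume: (a) for all $1\le\jmath\le\mathcal J$, $\sup_{1\le k\le k_{n,\jmath}}\sup_{P\in\mathbf P}\|q_{k,n,\jmath}\|_{L^\infty_P}\le B_n$ with $B_n\ge1$; (b) the class $\mathcal F_n\equiv\{\rho_\jmath(\cdot,\theta):\theta\in\Theta_n\cap R,\ 1\le\jmath\le\mathcal J\}$ has an envelope $F_n$ with $\sup_{P\in\mathbf P}E_P[F_n^2(V)]<\infty$; (c) $\sup_{P\in\mathbf P}J_{[\,]}(\|F_n\|_{L^2_P},\mathcal F_n,\|\cdot\|_{L^2_P})\le J_n$. Then for some $K_0>0$, $$\sup_{P\in\mathbf P}E_P\Big[\sup_{\theta\in\Theta_n\cap R}\|\mathbb W_{n,P}\rho(\cdot,\theta)*q_n^{k_n}\|_r\Big]\le K_0k_n^{1/r}\sqrt{\log(k_n)}B_nJ_n.$$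
   Context: $V=(X,Z)$ with $Z=(Z_1,\dots,Z_{\mathcal J})$, distributed according to $P\in\mathbf P$. $\Theta_n\cap R$ is a given parameter set, $\rho_\jmath(x,\theta)$ real functions, $\rho=(\rho_1,\dots,\rho_{\mathcal J})'$. $q^{k_{n,\jmath}}_{n,\jmath}(z_\jmath)=(q_{1,n,\jmath}(z_\jmath),\dots,q_{k_{n,\jmath},n,\jmath}(z_\jmath))'$, $k_n=\sum_\jmath k_{n,\jmath}$, and $\rho(\cdot,\theta)*q_n^{k_n}$ denotes the $k_n$-vector of functions $(\rho_\jmath(\cdot,\theta)q_{k,n,\jmath})_{\jmath,k}$. $\mathbb W_{n,P}$ is an isonormal process on $L^2_P$: a mean-zero Gaussian process indexed by $f\in L^2_P$ with $E[\mathbb W_{n,P}f\,\mathbb W_{n,P}g]=E_P[(f-E_Pf)(g-E_Pg)]$; applied to a vector of functions it acts coordinatewise. $\|\cdot\|_r$, $r\ge2$, is the $\ell^r$ norm. $N_{[\,]}$ denotes bracketing numbers under $\|\cdot\|_{L^2_P}$ and $J_{[\,]}(\delta,\mathcal F,\|\cdot\|_{L^2_P})\equiv\int_0^\delta\sqrt{1+\log N_{[\,]}(\epsilon,\mathcal F,\|\cdot\|_{L^2_P})}d\epsilon$. *)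

theory Defs
  imports "HOL-Probability.Probability"
begin

definition L2 :: "'v measure \<Rightarrow> ('v \<Rightarrow> real) set" where
  "L2 P = {f. f \<in> borel_measurable P \<and> integrable P (\<lambda>v. (f v)^2)}"

definition L2norm :: "'v measure \<Rightarrow> ('v \<Rightarrow> real) \<Rightarrow> real" where
  "L2norm P f = sqrt (\<integral>v. (f v)^2 \<partial>P)"

definition varP :: "'v measure \<Rightarrow> ('v \<Rightarrow> real) \<Rightarrow> real" where
  "varP P f = (\<integral>v. (f v - (\<integral>u. f u \<partial>P))^2 \<partial>P)"

definition centered_gaussian :: "'w measure \<Rightarrow> ('w \<Rightarrow> real) \<Rightarrow> real \<Rightarrow> bool" where
  "centered_gaussian Q X s2 \<longleftrightarrow>
     (s2 = 0 \<and> X \<in> borel_measurable Q \<and> (AE w in Q. X w = 0)) \<or>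
     (s2 > 0 \<and> distributed Q lborel X (normal_density 0 (sqrt s2)))"

text \<open>Isonormal process on L2_P, defined on the probability space Q: a centered Gaussian
  process indexed by L2_P (every finite linear combination is centered normal) with
  covariance E_P[(f - E_P f)(g - E_P g)], i.e. Var(sum a_f W f) = Var_P(sum a_f f).\<close>
definition isonormal :: "'v measure \<Rightarrow> 'w measure \<Rightarrow> (('v \<Rightarrow> real) \<Rightarrow> 'w \<Rightarrow> real) \<Rightarrow> bool" where
  "isonormal P Q W \<longleftrightarrow> prob_space Q \<and>
     (\<forall>F a. finite F \<and> F \<subseteq> L2 P \<longrightarrow>
        centered_gaussian Q (\<lambda>w. \<Sum>f\<in>F. a f * W f w) (varP P (\<lambda>v. \<Sum>f\<in>F. a f * f v)))"

definition eps_bracket :: "'v measure \<Rightarrow> real \<Rightarrow> ('v \<Rightarrow> real) \<times> ('v \<Rightarrow> real) \<Rightarrow> bool" where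
  "eps_bracket P eps b \<longleftrightarrow> fst b \<in> L2 P \<and> snd b \<in> L2 P \<and>
     L2norm P (\<lambda>v. snd b v - fst b v) < eps"

definition bracketing_number :: "'v measure \<Rightarrow> real \<Rightarrow> ('v \<Rightarrow> real) set \<Rightarrow> enat" where
  "bracketing_number P eps F = Inf {enat (card B) | B. finite B \<and> (\<forall>b\<in>B. eps_bracket P eps b) \<and>
      (\<forall>f\<in>F. \<exists>b\<in>B. \<forall>v\<in>space P. fst b v \<le> f v \<and> f v \<le> snd b v)}"

definition bracketing_integral :: "'v measure \<Rightarrow> real \<Rightarrow> ('v \<Rightarrow> real) set \<Rightarrow> ennreal" where
  "bracketing_integral P delta F =
     (\<integral>\<^sup>+ eps. indicator {0..delta} eps *
        (case bracketing_number P eps F of enat m \<Rightarrow> ennreal (sqrt (1 + ln (real m))) | \<infinity> \<Rightarrow> \<infinity>)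
      \<partial>lborel)"

end

(* The r-norm of the k_n-vector W(rho(., theta) * q) is at most k_n^(1/r) times its largest
   coordinate, so it suffices to bound the expected maximum of the centered Gaussian family
   W(rho_j(., theta) q_k) over all coordinates and all theta.  This is done by chaining with
   brackets: at scale delta / 2^k, with delta the L2 norm of the envelope, theta is replaced by a
   representative whose rho_j lies in the same (delta / 2^k)-bracket; as |q| <= B_n, the
   corresponding coordinates are within B_n delta / 2^k in L2.  Each link of the chain is then
   controlled by the maximal inequality E max_{i <= m} |g_i| <= sigma sqrt (2 ln (2 m)) for
   Gaussians, and the sum over the dyadic scales is a lower Riemann sum of the bracketing
   integral, up to the factor sqrt (ln k_n) coming from the k_n coordinates. *)
theory Submission
  imports Defs "HOL-Analysis.Harmonic_Numbers"
begin

lemma centered_gaussian_measurable: "centered_gaussian Q X v \<Longrightarrow> X \<in> borel_measurable Q"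
  unfolding centered_gaussian_def by (auto dest!: distributed_measurable simp: measurable_lborel2)

lemma centered_gaussian_variance_nonneg: "centered_gaussian Q X v \<Longrightarrow> 0 \<le> v"
  unfolding centered_gaussian_def by auto

lemma normal_density_mult_exp:
  assumes "0 < s"
  shows "normal_density 0 s x * exp (l * x) = exp (l\<^sup>2 * s\<^sup>2 / 2) * normal_density (l * s\<^sup>2) s x"
proof -
  have "- x\<^sup>2 / (2 * s\<^sup>2) + l * x = l\<^sup>2 * s\<^sup>2 / 2 + (- (x - l * s\<^sup>2)\<^sup>2 / (2 * s\<^sup>2))"
    using assms by (simp add: field_simps power2_eq_square)
  then show ?thesis
    unfolding normal_density_def by (simp add: exp_add[symmetric])
qed

lemma nn_integral_normal_density: "0 < s \<Longrightarrow> (\<integral>\<^sup>+x. normal_density m s x \<partial>lborel) = 1"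
  using integrable_normal_density[of s m] integral_normal_density[of s m]
  by (subst nn_integral_eq_integral) auto

lemma centered_gaussian_nn_integral_exp:
  assumes "prob_space Q" and "centered_gaussian Q X v"
  shows "(\<integral>\<^sup>+w. exp (l * X w) \<partial>Q) = exp (l\<^sup>2 * v / 2)"
proof (cases "v = 0")
  case True
  with assms(2) have "AE w in Q. X w = 0"
    unfolding centered_gaussian_def by auto
  then have "(\<integral>\<^sup>+w. exp (l * X w) \<partial>Q) = (\<integral>\<^sup>+w. 1 \<partial>Q)"
    by (intro nn_integral_cong_AE) auto
  then show ?thesis
    using True prob_space.emeasure_space_1[OF assms(1)] by simp
next
  case False
  with assms(2) have v: "0 < v" and distr: "distributed Q lborel X (normal_density 0 (sqrt v))"
    unfolding centered_gaussian_def by auto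
  have "(\<integral>\<^sup>+w. exp (l * X w) \<partial>Q) = (\<integral>\<^sup>+x. normal_density 0 (sqrt v) x * ennreal (exp (l * x)) \<partial>lborel)"
    by (rule distributed_nn_integral[OF distr, symmetric]) simp
  also have "\<dots> = (\<integral>\<^sup>+x. exp (l\<^sup>2 * v / 2) * ennreal (normal_density (l * v) (sqrt v) x) \<partial>lborel)"
    using normal_density_mult_exp[of "sqrt v" _ l] v
    by (intro nn_integral_cong) (simp add: ennreal_mult[symmetric])
  also have "\<dots> = exp (l\<^sup>2 * v / 2)"
    using v by (simp add: nn_integral_cmult nn_integral_normal_density)
  finally show ?thesis .
qed

lemma exp_Max_abs_le_sum_exp:
  fixes G :: "('w \<Rightarrow> real) set"
  assumes "finite G" and "G \<noteq> {}" and "0 \<le> l"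
  shows "exp (l * Max ((\<lambda>g. \<bar>g w\<bar>) ` G)) \<le> (\<Sum>g\<in>G. exp (l * g w) + exp (- l * g w))"
proof -
  have "Max ((\<lambda>g. \<bar>g w\<bar>) ` G) \<in> (\<lambda>g. \<bar>g w\<bar>) ` G"
    using assms by (intro Max_in) auto
  then obtain g0 where g0: "g0 \<in> G" "Max ((\<lambda>g. \<bar>g w\<bar>) ` G) = \<bar>g0 w\<bar>"
    by auto
  have "exp (l * \<bar>g0 w\<bar>) \<le> exp (l * g0 w) + exp (- l * g0 w)"
    by (cases "0 \<le> g0 w") auto
  also have "\<dots> \<le> (\<Sum>g\<in>G. exp (l * g w) + exp (- l * g w))"
    by (rule member_le_sum) (use g0 assms in \<open>auto intro: add_nonneg_nonneg\<close>)
  finally show ?thesis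
    using g0 by simp
qed

text \<open>Integrated form of \<open>t + 1 \<le> c + exp (t - c)\<close>.\<close>
lemma nn_integral_le_via_exp_moment:
  assumes Q: "prob_space Q" and Z: "Z \<in> borel_measurable Q" and "\<And>w. 0 \<le> Z w"
    and l: "0 < l" and c: "0 \<le> c"
  shows "ennreal l * (\<integral>\<^sup>+w. Z w \<partial>Q) + 1 \<le> c + exp (- c) * (\<integral>\<^sup>+w. exp (l * Z w) \<partial>Q)"
proof -
  have pointwise: "ennreal (l * Z w) + 1 \<le> c + exp (- c) * ennreal (exp (l * Z w))" for w
  proof -
    have "l * Z w - c + 1 \<le> exp (l * Z w - c)"
      using exp_ge_add_one_self[of "l * Z w - c"] by linarith
    then have "ennreal (l * Z w + 1) \<le> ennreal (c + exp (- c) * exp (l * Z w))"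
      by (intro ennreal_leI) (simp add: exp_diff exp_minus field_simps)
    then show ?thesis
      using assms(3)[of w] l c by (simp add: ennreal_plus ennreal_mult)
  qed
  have "ennreal l * (\<integral>\<^sup>+w. Z w \<partial>Q) + 1 = (\<integral>\<^sup>+w. ennreal (l * Z w) + 1 \<partial>Q)"
    using Z l prob_space.emeasure_space_1[OF Q]
    by (simp add: nn_integral_add nn_integral_cmult ennreal_mult')
  also have "\<dots> \<le> (\<integral>\<^sup>+w. c + exp (- c) * ennreal (exp (l * Z w)) \<partial>Q)"
    by (intro nn_integral_mono pointwise)
  also have "\<dots> = c + exp (- c) * (\<integral>\<^sup>+w. exp (l * Z w) \<partial>Q)"
    using Z prob_space.emeasure_space_1[OF Q]
    by (simp add: nn_integral_add nn_integral_cmult)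
  finally show ?thesis .
qed

lemma nn_integral_exp_Max_abs_gaussians_le:
  assumes Q: "prob_space Q" and G: "finite G" "G \<noteq> {}" and "0 \<le> l"
    and gauss: "\<And>g. g \<in> G \<Longrightarrow> \<exists>v. centered_gaussian Q g v \<and> v \<le> \<sigma>\<^sup>2"
  shows "(\<integral>\<^sup>+w. exp (l * Max ((\<lambda>g. \<bar>g w\<bar>) ` G)) \<partial>Q) \<le> 2 * card G * exp (l\<^sup>2 * \<sigma>\<^sup>2 / 2)"
proof -
  have exp_moment: "(\<integral>\<^sup>+w. exp (a * g w) \<partial>Q) \<le> exp (l\<^sup>2 * \<sigma>\<^sup>2 / 2)"
    if "g \<in> G" and "a\<^sup>2 = l\<^sup>2" for g a
  proof -
    obtain v where v: "centered_gaussian Q g v" "v \<le> \<sigma>\<^sup>2"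
      using gauss \<open>g \<in> G\<close> by blast
    have "a\<^sup>2 * v / 2 \<le> l\<^sup>2 * \<sigma>\<^sup>2 / 2"
      using v(2) \<open>a\<^sup>2 = l\<^sup>2\<close> by (simp add: mult_left_mono)
    then show ?thesis
      using centered_gaussian_nn_integral_exp[OF Q v(1), of a] by simp
  qed
  have measurable: "g \<in> borel_measurable Q" if "g \<in> G" for g
    using gauss[OF that] centered_gaussian_measurable by blast
  have "(\<integral>\<^sup>+w. exp (l * Max ((\<lambda>g. \<bar>g w\<bar>) ` G)) \<partial>Q)
      \<le> (\<integral>\<^sup>+w. (\<Sum>g\<in>G. ennreal (exp (l * g w)) + ennreal (exp (- l * g w))) \<partial>Q)"
    using exp_Max_abs_le_sum_exp[OF G \<open>0 \<le> l\<close>]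
    by (intro nn_integral_mono)
      (simp add: ennreal_plus[symmetric] sum_nonneg add_nonneg_nonneg del: ennreal_plus)
  also have "\<dots> = (\<Sum>g\<in>G. (\<integral>\<^sup>+w. exp (l * g w) \<partial>Q) + (\<integral>\<^sup>+w. exp (- l * g w) \<partial>Q))"
    using measurable by (simp add: nn_integral_sum nn_integral_add)
  also have "\<dots> \<le> (\<Sum>g\<in>G. ennreal (exp (l\<^sup>2 * \<sigma>\<^sup>2 / 2)) + exp (l\<^sup>2 * \<sigma>\<^sup>2 / 2))"
    using exp_moment[of _ l] exp_moment[of _ "- l"] by (intro sum_mono add_mono) auto
  also have "\<dots> = ennreal (2 * card G * exp (l\<^sup>2 * \<sigma>\<^sup>2 / 2))"
    by (simp add: ennreal_plus[symmetric] ennreal_of_nat_eq_real_of_nat ennreal_mult' mult.assoc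
        mult.left_commute del: ennreal_plus)
  finally show ?thesis .
qed

lemma nn_integral_Max_abs_degenerate_gaussians:
  assumes G: "finite G" "G \<noteq> {}" and "\<And>g. g \<in> G \<Longrightarrow> centered_gaussian Q g 0"
  shows "(\<integral>\<^sup>+w. Max ((\<lambda>g. \<bar>g w\<bar>) ` G) \<partial>Q) = 0"
proof -
  have "AE w in Q. g w = 0" if "g \<in> G" for g
    using assms(3)[OF that] unfolding centered_gaussian_def by simp
  then have "AE w in Q. \<forall>g\<in>G. g w = 0"
    by (intro AE_finite_allI[OF G(1)])
  then have "AE w in Q. Max ((\<lambda>g. \<bar>g w\<bar>) ` G) = 0"
    by eventually_elim (use G(2) in \<open>auto intro!: Max_eqI[OF finite_imageI[OF G(1)]]\<close>)
  then have "(\<integral>\<^sup>+w. Max ((\<lambda>g. \<bar>g w\<bar>) ` G) \<partial>Q) = (\<integral>\<^sup>+w. 0 \<partial>Q)"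
    by (intro nn_integral_cong_AE) auto
  then show ?thesis
    by simp
qed

text \<open>Take \<open>l = sqrt (2 * L) / \<sigma>\<close> with \<open>L = ln (2 * m)\<close>: the exponential moment of the
  maximum at \<open>l\<close> is then at most \<open>exp (2 * L)\<close>.\<close>
lemma nn_integral_Max_abs_gaussians_le:
  assumes Q: "prob_space Q" and G: "finite G" "G \<noteq> {}" and m: "real (card G) \<le> m"
    and gauss: "\<And>g. g \<in> G \<Longrightarrow> \<exists>v. centered_gaussian Q g v \<and> v \<le> \<sigma>\<^sup>2" and "0 \<le> \<sigma>"
  shows "(\<integral>\<^sup>+w. Max ((\<lambda>g. \<bar>g w\<bar>) ` G) \<partial>Q) \<le> \<sigma> * sqrt (2 * ln (2 * m))"
proof (cases "\<sigma> = 0")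
  case True
  have "centered_gaussian Q g 0" if "g \<in> G" for g
    using gauss[OF that] centered_gaussian_variance_nonneg True by force
  then show ?thesis
    using nn_integral_Max_abs_degenerate_gaussians[OF G] by simp
next
  case False
  with \<open>0 \<le> \<sigma>\<close> have "0 < \<sigma>" by simp
  define Z where "Z w = Max ((\<lambda>g. \<bar>g w\<bar>) ` G)" for w
  define L where "L = ln (2 * m)"
  define l where "l = sqrt (2 * L) / \<sigma>"
  have "1 \<le> card G"
    using G by (simp add: Suc_le_eq card_gt_0_iff)
  with m have "1 \<le> m" by linarith
  then have "0 < L"
    unfolding L_def by simp
  then have "0 < l" and l_sq: "l\<^sup>2 * \<sigma>\<^sup>2 / 2 = L"
    using \<open>0 < \<sigma>\<close> by (simp_all add: l_def power_divide)
  have Z_nonneg: "0 \<le> Z w" for w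
    unfolding Z_def using G by (auto simp: Max_ge_iff)
  have Z_measurable: "Z \<in> borel_measurable Q"
    unfolding Z_def using gauss centered_gaussian_measurable
    by (intro borel_measurable_Max[OF G(1)] borel_measurable_abs) blast
  have moment: "exp (- (2 * L)) * (2 * card G * exp L) \<le> 1"
  proof -
    have "exp (- (2 * L)) * exp L = exp (- L)"
      by (simp add: exp_add[symmetric])
    also have "\<dots> = 1 / (2 * m)"
      using \<open>1 \<le> m\<close> by (simp add: L_def exp_minus inverse_eq_divide)
    finally have "exp (- (2 * L)) * exp L = 1 / (2 * m)" .
    then have "exp (- (2 * L)) * (2 * card G * exp L) = 2 * card G * (1 / (2 * m))"
      by (metis mult.commute mult.left_commute)
    also have "\<dots> = card G / m"
      by simp
    also have "\<dots> \<le> 1"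
      using m \<open>1 \<le> m\<close> by simp
    finally show ?thesis .
  qed
  have "ennreal l * (\<integral>\<^sup>+w. Z w \<partial>Q) + 1 \<le> 2 * L + exp (- (2 * L)) * (\<integral>\<^sup>+w. exp (l * Z w) \<partial>Q)"
    using \<open>0 < L\<close> by (intro nn_integral_le_via_exp_moment[OF Q Z_measurable Z_nonneg \<open>0 < l\<close>]) simp
  also have "\<dots> \<le> 2 * L + exp (- (2 * L)) * ennreal (2 * card G * exp L)"
    using nn_integral_exp_Max_abs_gaussians_le[OF Q G _ gauss, of l] \<open>0 < l\<close>
    unfolding Z_def l_sq by (intro add_left_mono mult_left_mono) auto
  also have "\<dots> \<le> ennreal (2 * L) + 1"
    using moment by (simp add: ennreal_mult[symmetric] ennreal_leI)
  finally have scaled: "ennreal l * (\<integral>\<^sup>+w. Z w \<partial>Q) \<le> 2 * L"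
    by (simp add: ennreal_add_left_cancel_le add.commute)
  have "(\<integral>\<^sup>+w. Z w \<partial>Q) = ennreal (1 / l) * (ennreal l * (\<integral>\<^sup>+w. Z w \<partial>Q))"
    using \<open>0 < l\<close> by (simp add: mult.assoc[symmetric] ennreal_mult[symmetric])
  also have "\<dots> \<le> ennreal (1 / l) * ennreal (2 * L)"
    using scaled by (rule mult_left_mono) simp
  also have "\<dots> = ennreal (2 * L / l)"
    using \<open>0 < l\<close> \<open>0 < L\<close> by (simp add: ennreal_mult[symmetric])
  also have "2 * L / l = \<sigma> * sqrt (2 * L)"
    using \<open>0 < L\<close> \<open>0 < \<sigma>\<close> by (simp add: l_def field_simps real_sqrt_mult)
  finally show ?thesis
    by (simp add: Z_def L_def)
qed

lemma nn_integral_Max_abs_gaussian_family_le: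
  assumes "prob_space Q" and "finite I" and "I \<noteq> {}" and "real (card (Y ` I)) \<le> m"
    and "\<And>s. s \<in> I \<Longrightarrow> \<exists>v. centered_gaussian Q (Y s) v \<and> v \<le> \<sigma>\<^sup>2" and "0 \<le> \<sigma>"
  shows "(\<integral>\<^sup>+w. Max ((\<lambda>s. \<bar>Y s w\<bar>) ` I) \<partial>Q) \<le> \<sigma> * sqrt (2 * ln (2 * m))"
proof -
  have "(\<integral>\<^sup>+w. Max ((\<lambda>g. \<bar>g w\<bar>) ` Y ` I) \<partial>Q) \<le> \<sigma> * sqrt (2 * ln (2 * m))"
    by (rule nn_integral_Max_abs_gaussians_le) (use assms in auto)
  then show ?thesis
    by (simp add: image_image)
qed

lemma isonormal_prob_space: "isonormal P Q W \<Longrightarrow> prob_space Q"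
  unfolding isonormal_def by blast

lemma isonormal_linear_combination:
  assumes "isonormal P Q W" and "finite F" and "F \<subseteq> L2 P"
  shows "centered_gaussian Q (\<lambda>w. \<Sum>f\<in>F. a f * W f w) (varP P (\<lambda>v. \<Sum>f\<in>F. a f * f v))"
  using assms unfolding isonormal_def by blast

lemma isonormal_gaussian:
  assumes "isonormal P Q W" and "f \<in> L2 P"
  shows "centered_gaussian Q (W f) (varP P f)"
  using isonormal_linear_combination[OF assms(1), of "{f}" "\<lambda>_. 1"] assms(2) by simp

lemma isonormal_diff_gaussian:
  assumes "isonormal P Q W" and "f \<in> L2 P" and "g \<in> L2 P"
  shows "centered_gaussian Q (\<lambda>w. W f w - W g w) (varP P (\<lambda>v. f v - g v))"
proof (cases "f = g")
  case True
  then show ?thesis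
    using isonormal_linear_combination[OF assms(1), of "{f}" "\<lambda>_. 0"] assms(2) by simp
next
  case False
  then show ?thesis
    using isonormal_linear_combination[OF assms(1), of "{f, g}" "\<lambda>h. if h = f then 1 else - 1"]
      assms(2,3) by (simp add: sum.insert_if)
qed

lemma square_diff_le: "((a::real) - c)\<^sup>2 \<le> 2 * (a - b)\<^sup>2 + 2 * (b - c)\<^sup>2"
proof -
  have "0 \<le> ((a - b) - (b - c))\<^sup>2"
    by simp
  then show ?thesis
    by (simp add: power2_eq_square algebra_simps)
qed

lemma L2_diff:
  assumes "f \<in> L2 P" and "g \<in> L2 P"
  shows "(\<lambda>v. f v - g v) \<in> L2 P"
proof -
  have "integrable P (\<lambda>v. (f v - g v)\<^sup>2)"
  proof (rule Bochner_Integration.integrable_bound)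
    show "integrable P (\<lambda>v. 2 * (f v)\<^sup>2 + 2 * (g v)\<^sup>2)"
      using assms unfolding L2_def by auto
    show "AE v in P. norm ((f v - g v)\<^sup>2) \<le> norm (2 * (f v)\<^sup>2 + 2 * (g v)\<^sup>2)"
    proof (intro AE_I2)
      fix v
      show "norm ((f v - g v)\<^sup>2) \<le> norm (2 * (f v)\<^sup>2 + 2 * (g v)\<^sup>2)"
        using square_diff_le[of "f v" "g v" 0] by simp
    qed
  qed (use assms in \<open>auto simp: L2_def\<close>)
  then show ?thesis
    using assms unfolding L2_def by auto
qed

lemma varP_le_second_moment:
  assumes "prob_space P" and "f \<in> L2 P"
  shows "varP P f \<le> (\<integral>v. (f v)\<^sup>2 \<partial>P)"
proof -
  interpret prob_space P by fact
  have f2: "integrable P (\<lambda>v. (f v)\<^sup>2)" and fm: "f \<in> borel_measurable P"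
    using assms(2) unfolding L2_def by auto
  have f: "integrable P f"
    by (rule square_integrable_imp_integrable[OF fm f2])
  define c where "c = (\<integral>u. f u \<partial>P)"
  have "varP P f = (\<integral>v. (f v)\<^sup>2 + c\<^sup>2 - 2 * f v * c \<partial>P)"
    unfolding varP_def c_def by (simp add: power2_diff)
  also have "\<dots> = (\<integral>v. (f v)\<^sup>2 \<partial>P) - c\<^sup>2"
    using f f2 by (simp add: c_def prob_space power2_eq_square)
  finally show ?thesis
    by simp
qed

lemma second_moment_diff_le:
  assumes "a \<in> L2 P" and "b \<in> L2 P" and "c \<in> L2 P"
  shows "(\<integral>v. (a v - c v)\<^sup>2 \<partial>P) \<le> 2 * (\<integral>v. (a v - b v)\<^sup>2 \<partial>P) + 2 * (\<integral>v. (b v - c v)\<^sup>2 \<partial>P)"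
proof -
  have ab: "integrable P (\<lambda>v. (a v - b v)\<^sup>2)" and bc: "integrable P (\<lambda>v. (b v - c v)\<^sup>2)"
    and ac: "integrable P (\<lambda>v. (a v - c v)\<^sup>2)"
    using L2_diff[OF assms(1,2)] L2_diff[OF assms(2,3)] L2_diff[OF assms(1,3)]
    unfolding L2_def by auto
  have "(\<integral>v. (a v - c v)\<^sup>2 \<partial>P) \<le> (\<integral>v. 2 * (a v - b v)\<^sup>2 + 2 * (b v - c v)\<^sup>2 \<partial>P)"
    using ab bc by (intro integral_mono[OF ac] square_diff_le) auto
  also have "\<dots> = 2 * (\<integral>v. (a v - b v)\<^sup>2 \<partial>P) + 2 * (\<integral>v. (b v - c v)\<^sup>2 \<partial>P)"
    using ab bc by simp
  finally show ?thesis .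
qed

lemma Max_abs_nonneg:
  fixes f :: "'i \<Rightarrow> real"
  assumes "finite I" and "I \<noteq> {}"
  shows "0 \<le> Max ((\<lambda>s. \<bar>f s\<bar>) ` I)"
proof -
  obtain s where "s \<in> I"
    using assms by blast
  then have "\<bar>f s\<bar> \<le> Max ((\<lambda>s. \<bar>f s\<bar>) ` I)"
    using assms by (intro Max_ge) auto
  then show ?thesis
    by linarith
qed

lemma Max_abs_le_chain:
  fixes X :: "'i \<Rightarrow> real"
  assumes "finite I" and "I \<noteq> {}"
  shows "Max ((\<lambda>s. \<bar>X s\<bar>) ` I)
    \<le> Max ((\<lambda>s. \<bar>X (\<pi> 0 s)\<bar>) ` I) + (\<Sum>k<K. Max ((\<lambda>s. \<bar>X (\<pi> (Suc k) s) - X (\<pi> k s)\<bar>) ` I))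
      + Max ((\<lambda>s. \<bar>X s - X (\<pi> K s)\<bar>) ` I)"
proof -
  have Max_ge: "\<bar>f s\<bar> \<le> Max ((\<lambda>s. \<bar>f s\<bar>) ` I)" if "s \<in> I" for f :: "_ \<Rightarrow> real" and s
    using assms that by (intro Max_ge) auto
  have "\<bar>X s\<bar> \<le> Max ((\<lambda>s. \<bar>X (\<pi> 0 s)\<bar>) ` I)
      + (\<Sum>k<K. Max ((\<lambda>s. \<bar>X (\<pi> (Suc k) s) - X (\<pi> k s)\<bar>) ` I)) + Max ((\<lambda>s. \<bar>X s - X (\<pi> K s)\<bar>) ` I)"
    if "s \<in> I" for s
  proof -
    have "X s = X (\<pi> 0 s) + (\<Sum>k<K. X (\<pi> (Suc k) s) - X (\<pi> k s)) + (X s - X (\<pi> K s))"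
      using sum_lessThan_telescope[of "\<lambda>k. X (\<pi> k s)" K] by simp
    then have "\<bar>X s\<bar> \<le> \<bar>X (\<pi> 0 s)\<bar> + \<bar>\<Sum>k<K. X (\<pi> (Suc k) s) - X (\<pi> k s)\<bar> + \<bar>X s - X (\<pi> K s)\<bar>"
      by linarith
    also have "\<dots> \<le> \<bar>X (\<pi> 0 s)\<bar> + (\<Sum>k<K. \<bar>X (\<pi> (Suc k) s) - X (\<pi> k s)\<bar>) + \<bar>X s - X (\<pi> K s)\<bar>"
      by (intro add_mono sum_abs order_refl)
    also have "\<dots> \<le> Max ((\<lambda>s. \<bar>X (\<pi> 0 s)\<bar>) ` I)
        + (\<Sum>k<K. Max ((\<lambda>s. \<bar>X (\<pi> (Suc k) s) - X (\<pi> k s)\<bar>) ` I)) + Max ((\<lambda>s. \<bar>X s - X (\<pi> K s)\<bar>) ` I)"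
      using that by (intro add_mono sum_mono Max_ge)
    finally show ?thesis .
  qed
  then show ?thesis
    using assms by (subst Max_le_iff) auto
qed

lemma card_image_pair_le:
  assumes "finite I"
  shows "card ((\<lambda>s. h (a s) (b s)) ` I) \<le> card (a ` I) * card (b ` I)"
proof -
  have "(\<lambda>s. h (a s) (b s)) ` I \<subseteq> (\<lambda>(x, y). h x y) ` (a ` I \<times> b ` I)"
    by auto
  then have "card ((\<lambda>s. h (a s) (b s)) ` I) \<le> card ((\<lambda>(x, y). h x y) ` (a ` I \<times> b ` I))"
    using assms by (intro card_mono) auto
  also have "\<dots> \<le> card (a ` I \<times> b ` I)"
    by (rule card_image_le) (use assms in auto)
  finally show ?thesis
    by (simp add: card_cartesian_product)
qed

lemma nn_integral_Max_abs_le_chain: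
  fixes X :: "'i \<Rightarrow> 'w \<Rightarrow> real" and \<pi> :: "nat \<Rightarrow> 'i \<Rightarrow> 'i"
  assumes I: "finite I" "I \<noteq> {}"
    and measurable_0: "\<And>s. s \<in> I \<Longrightarrow> X (\<pi> 0 s) \<in> borel_measurable Q"
    and measurable_k: "\<And>k s. k < K \<Longrightarrow> s \<in> I \<Longrightarrow> (\<lambda>w. X (\<pi> (Suc k) s) w - X (\<pi> k s) w) \<in> borel_measurable Q"
    and measurable_K: "\<And>s. s \<in> I \<Longrightarrow> (\<lambda>w. X s w - X (\<pi> K s) w) \<in> borel_measurable Q"
  shows "(\<integral>\<^sup>+w. Max ((\<lambda>s. \<bar>X s w\<bar>) ` I) \<partial>Q)
    \<le> (\<integral>\<^sup>+w. Max ((\<lambda>s. \<bar>X (\<pi> 0 s) w\<bar>) ` I) \<partial>Q)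
      + (\<Sum>k<K. \<integral>\<^sup>+w. Max ((\<lambda>s. \<bar>X (\<pi> (Suc k) s) w - X (\<pi> k s) w\<bar>) ` I) \<partial>Q)
      + (\<integral>\<^sup>+w. Max ((\<lambda>s. \<bar>X s w - X (\<pi> K s) w\<bar>) ` I) \<partial>Q)"
proof -
  define A0 where "A0 w = Max ((\<lambda>s. \<bar>X (\<pi> 0 s) w\<bar>) ` I)" for w
  define A where "A k w = Max ((\<lambda>s. \<bar>X (\<pi> (Suc k) s) w - X (\<pi> k s) w\<bar>) ` I)" for k w
  define AK where "AK w = Max ((\<lambda>s. \<bar>X s w - X (\<pi> K s) w\<bar>) ` I)" for w
  have measurable: "A0 \<in> borel_measurable Q" "\<And>k. k < K \<Longrightarrow> A k \<in> borel_measurable Q"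
    "AK \<in> borel_measurable Q"
    unfolding A0_def A_def AK_def using measurable_0 measurable_k measurable_K
    by (intro borel_measurable_Max[OF I(1)] borel_measurable_abs; blast)+
  have "(\<integral>\<^sup>+w. Max ((\<lambda>s. \<bar>X s w\<bar>) ` I) \<partial>Q)
      \<le> (\<integral>\<^sup>+w. ennreal (A0 w) + (\<Sum>k<K. ennreal (A k w)) + ennreal (AK w) \<partial>Q)"
  proof (intro nn_integral_mono)
    fix w
    have "Max ((\<lambda>s. \<bar>X s w\<bar>) ` I) \<le> A0 w + (\<Sum>k<K. A k w) + AK w"
      unfolding A0_def A_def AK_def by (rule Max_abs_le_chain[OF I])
    then show "ennreal (Max ((\<lambda>s. \<bar>X s w\<bar>) ` I)) \<le> ennreal (A0 w) + (\<Sum>k<K. ennreal (A k w)) + ennreal (AK w)"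
      using Max_abs_nonneg[OF I]
      by (simp add: A0_def A_def AK_def ennreal_plus[symmetric] sum_nonneg ennreal_leI
          del: ennreal_plus)
  qed
  also have "\<dots> = (\<integral>\<^sup>+w. A0 w \<partial>Q) + (\<Sum>k<K. \<integral>\<^sup>+w. A k w \<partial>Q) + (\<integral>\<^sup>+w. AK w \<partial>Q)"
  proof -
    have "(\<integral>\<^sup>+w. (\<Sum>k<K. ennreal (A k w)) \<partial>Q) = (\<Sum>k<K. \<integral>\<^sup>+w. A k w \<partial>Q)"
      by (rule nn_integral_sum) (use measurable(2) in auto)
    moreover have "(\<lambda>w. \<Sum>k<K. ennreal (A k w)) \<in> borel_measurable Q"
      using measurable(2) by (intro borel_measurable_sum) auto
    ultimately show ?thesis
      using measurable(1,3) by (simp add: nn_integral_add)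
  qed
  finally show ?thesis
    by (simp only: A0_def A_def AK_def)
qed

text \<open>Level \<open>k\<close> of the chain has at most \<open>m (Suc k) * m k\<close> distinct Gaussian increments.\<close>
lemma nn_integral_Max_abs_chaining:
  fixes X :: "'i \<Rightarrow> 'w \<Rightarrow> real" and \<pi> :: "nat \<Rightarrow> 'i \<Rightarrow> 'i"
  assumes Q: "prob_space Q" and I: "finite I" "I \<noteq> {}"
    and gauss_0: "\<And>s. s \<in> I \<Longrightarrow> \<exists>v. centered_gaussian Q (X (\<pi> 0 s)) v \<and> v \<le> \<sigma>0\<^sup>2"
    and gauss_k: "\<And>k s. k < K \<Longrightarrow> s \<in> I \<Longrightarrow>
      \<exists>v. centered_gaussian Q (\<lambda>w. X (\<pi> (Suc k) s) w - X (\<pi> k s) w) v \<and> v \<le> (\<sigma> k)\<^sup>2"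
    and gauss_K: "\<And>s. s \<in> I \<Longrightarrow> \<exists>v. centered_gaussian Q (\<lambda>w. X s w - X (\<pi> K s) w) v \<and> v \<le> \<sigma>K\<^sup>2"
    and card: "\<And>k. k \<le> K \<Longrightarrow> real (card (\<pi> k ` I)) \<le> m k"
    and "0 \<le> \<sigma>0" and "\<And>k. 0 \<le> \<sigma> k" and "0 \<le> \<sigma>K"
  shows "(\<integral>\<^sup>+w. Max ((\<lambda>s. \<bar>X s w\<bar>) ` I) \<partial>Q)
    \<le> \<sigma>0 * sqrt (2 * ln (2 * m 0)) + (\<Sum>k<K. \<sigma> k * sqrt (2 * ln (2 * (m (Suc k) * m k))))
      + \<sigma>K * sqrt (2 * ln (2 * real (card I)))"
proof -
  have m_ge_1: "1 \<le> m k" if "k \<le> K" for k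
  proof -
    have "1 \<le> card (\<pi> k ` I)"
      using I by (simp add: Suc_le_eq card_gt_0_iff)
    then show ?thesis
      using card[OF that] by linarith
  qed
  have terms: "0 \<le> \<sigma> k * sqrt (2 * ln (2 * (m (Suc k) * m k)))" if "k \<in> {..<K}" for k
    using m_ge_1[of k] m_ge_1[of "Suc k"] that mult_mono[of 1 "m (Suc k)" 1 "m k"] \<open>0 \<le> \<sigma> k\<close> by simp
  have "(\<integral>\<^sup>+w. Max ((\<lambda>s. \<bar>X s w\<bar>) ` I) \<partial>Q)
    \<le> (\<integral>\<^sup>+w. Max ((\<lambda>s. \<bar>X (\<pi> 0 s) w\<bar>) ` I) \<partial>Q)
      + (\<Sum>k<K. \<integral>\<^sup>+w. Max ((\<lambda>s. \<bar>X (\<pi> (Suc k) s) w - X (\<pi> k s) w\<bar>) ` I) \<partial>Q)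
      + (\<integral>\<^sup>+w. Max ((\<lambda>s. \<bar>X s w - X (\<pi> K s) w\<bar>) ` I) \<partial>Q)"
    using gauss_0 gauss_k gauss_K centered_gaussian_measurable
    by (intro nn_integral_Max_abs_le_chain[OF I]) blast+
  also have "\<dots> \<le> ennreal (\<sigma>0 * sqrt (2 * ln (2 * m 0)))
      + (\<Sum>k<K. ennreal (\<sigma> k * sqrt (2 * ln (2 * (m (Suc k) * m k)))))
      + ennreal (\<sigma>K * sqrt (2 * ln (2 * real (card I))))"
  proof (intro add_mono sum_mono)
    have "card ((\<lambda>s. X (\<pi> 0 s)) ` I) \<le> card (\<pi> 0 ` I)"
      using card_image_le[of "\<pi> 0 ` I" X] I by (simp add: image_image)
    then show "(\<integral>\<^sup>+w. Max ((\<lambda>s. \<bar>X (\<pi> 0 s) w\<bar>) ` I) \<partial>Q) \<le> ennreal (\<sigma>0 * sqrt (2 * ln (2 * m 0)))"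
      using card[of 0] gauss_0 \<open>0 \<le> \<sigma>0\<close> by (intro nn_integral_Max_abs_gaussian_family_le[OF Q I]) auto
    show "(\<integral>\<^sup>+w. Max ((\<lambda>s. \<bar>X s w - X (\<pi> K s) w\<bar>) ` I) \<partial>Q)
        \<le> ennreal (\<sigma>K * sqrt (2 * ln (2 * real (card I))))"
      using card_image_le[OF I(1)] gauss_K \<open>0 \<le> \<sigma>K\<close>
      by (intro nn_integral_Max_abs_gaussian_family_le[OF Q I]) auto
    fix k
    assume "k \<in> {..<K}"
    have "real (card ((\<lambda>s w. X (\<pi> (Suc k) s) w - X (\<pi> k s) w) ` I))
        \<le> real (card (\<pi> (Suc k) ` I)) * real (card (\<pi> k ` I))"
      using card_image_pair_le[OF I(1), of "\<lambda>a b w. X a w - X b w"] by (simp flip: of_nat_mult)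
    also have "\<dots> \<le> m (Suc k) * m k"
      using \<open>k \<in> {..<K}\<close> card[of "Suc k"] card[of k] by (intro mult_mono) auto
    finally show "(\<integral>\<^sup>+w. Max ((\<lambda>s. \<bar>X (\<pi> (Suc k) s) w - X (\<pi> k s) w\<bar>) ` I) \<partial>Q)
        \<le> ennreal (\<sigma> k * sqrt (2 * ln (2 * (m (Suc k) * m k))))"
      using \<open>k \<in> {..<K}\<close> gauss_k \<open>0 \<le> \<sigma> k\<close> by (intro nn_integral_Max_abs_gaussian_family_le[OF Q I]) auto
  qed
  also have "\<dots> = ennreal (\<sigma>0 * sqrt (2 * ln (2 * m 0))
      + (\<Sum>k<K. \<sigma> k * sqrt (2 * ln (2 * (m (Suc k) * m k)))) + \<sigma>K * sqrt (2 * ln (2 * real (card I))))"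
  proof -
    have "1 \<le> card I"
      using I by (simp add: Suc_le_eq card_gt_0_iff)
    then have "0 \<le> \<sigma>K * sqrt (2 * ln (2 * real (card I)))"
      using \<open>0 \<le> \<sigma>K\<close> by simp
    moreover have "0 \<le> \<sigma>0 * sqrt (2 * ln (2 * m 0))"
      using m_ge_1[of 0] \<open>0 \<le> \<sigma>0\<close> by simp
    moreover have "(\<Sum>k<K. ennreal (\<sigma> k * sqrt (2 * ln (2 * (m (Suc k) * m k)))))
        = ennreal (\<Sum>k<K. \<sigma> k * sqrt (2 * ln (2 * (m (Suc k) * m k))))"
      using terms by (rule sum_ennreal)
    moreover have "0 \<le> (\<Sum>k<K. \<sigma> k * sqrt (2 * ln (2 * (m (Suc k) * m k))))"
      using terms by (rule sum_nonneg)
    ultimately show ?thesis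
      by (simp add: ennreal_plus)
  qed
  finally show ?thesis .
qed

definition entropy_weight :: "enat \<Rightarrow> ennreal" where
  "entropy_weight x = (case x of enat m \<Rightarrow> ennreal (sqrt (1 + ln (real m))) | \<infinity> \<Rightarrow> \<infinity>)"

lemma bracketing_integral_eq:
  "bracketing_integral P \<delta> C
    = (\<integral>\<^sup>+e. indicator {0..\<delta>} e * entropy_weight (bracketing_number P e C) \<partial>lborel)"
  unfolding bracketing_integral_def entropy_weight_def ..

lemma entropy_weight_mono:
  assumes "x \<le> y"
  shows "entropy_weight x \<le> entropy_weight y"
proof (cases y)
  case (enat n)
  with assms obtain m where x: "x = enat m" and "m \<le> n"
    by (cases x) auto
  then have "ln (real m) \<le> ln (real n)"
    by (cases "m = 0"; cases "n = 0") auto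
  then show ?thesis
    unfolding entropy_weight_def x enat by (simp add: ennreal_leI)
qed (simp add: entropy_weight_def)

lemma bracketing_number_antimono:
  assumes "a \<le> b"
  shows "bracketing_number P b C \<le> bracketing_number P a C"
  unfolding bracketing_number_def
  by (rule Inf_superset_mono) (use assms in \<open>fastforce simp: eps_bracket_def\<close>)

lemma bracketing_number_enatE:
  assumes "bracketing_number P \<epsilon> C = enat m"
  obtains Bs where "finite Bs" and "card Bs = m" and "\<And>b. b \<in> Bs \<Longrightarrow> eps_bracket P \<epsilon> b"
    and "\<And>f. f \<in> C \<Longrightarrow> \<exists>b\<in>Bs. \<forall>v\<in>space P. fst b v \<le> f v \<and> f v \<le> snd b v"
proof -
  define S where "S = {enat (card Bs) | Bs. finite Bs \<and> (\<forall>b\<in>Bs. eps_bracket P \<epsilon> b) \<and>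
      (\<forall>f\<in>C. \<exists>b\<in>Bs. \<forall>v\<in>space P. fst b v \<le> f v \<and> f v \<le> snd b v)}"
  have "Inf S = enat m"
    using assms unfolding bracketing_number_def S_def .
  then have "S \<noteq> {}"
    by (auto simp: top_enat_def)
  then have "Inf S \<in> S"
    unfolding Inf_enat_def by (auto intro: LeastI_ex)
  then show ?thesis
    using that \<open>Inf S = enat m\<close> unfolding S_def by auto
qed

lemma disjoint_family_dyadic_intervals:
  fixes \<delta> :: real
  assumes "0 < \<delta>"
  shows "disjoint_family (\<lambda>k::nat. {\<delta> / 2 ^ Suc k <.. \<delta> / 2 ^ k})"
proof -
  have disjoint: "{\<delta> / 2 ^ Suc j <.. \<delta> / 2 ^ j} \<inter> {\<delta> / 2 ^ Suc i <.. \<delta> / 2 ^ i} = {}"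
    if "i < j" for i j :: nat
  proof -
    have "(2::real) ^ Suc i \<le> 2 ^ j"
      using that by (intro power_increasing) auto
    then have "\<delta> / 2 ^ j \<le> \<delta> / 2 ^ Suc i"
      using assms by (intro divide_left_mono) auto
    then show ?thesis
      by auto
  qed
  show ?thesis
    unfolding disjoint_family_on_def
  proof (intro ballI impI)
    fix i j :: nat
    assume "i \<noteq> j"
    then consider "i < j" | "j < i"
      by linarith
    then show "{\<delta> / 2 ^ Suc i <.. \<delta> / 2 ^ i} \<inter> {\<delta> / 2 ^ Suc j <.. \<delta> / 2 ^ j} = {}"
      using disjoint[of i j] disjoint[of j i] by cases blast+
  qed
qed

text \<open>The Riemann sum of the bracketing integral over the dyadic partition of \<open>(0, \<delta>]\<close>,
  evaluated at the right endpoints, is a lower sum because \<open>N\<close> is antitone.\<close>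
lemma dyadic_sum_le_nn_integral:
  fixes N :: "real \<Rightarrow> enat"
  assumes antimono: "\<And>a b. 0 < a \<Longrightarrow> a \<le> b \<Longrightarrow> N b \<le> N a" and "0 < \<delta>"
  shows "(\<Sum>k\<le>K. entropy_weight (N (\<delta> / 2 ^ k)) * ennreal (\<delta> / 2 ^ Suc k))
    \<le> (\<integral>\<^sup>+e. indicator {0..\<delta>} e * entropy_weight (N e) \<partial>lborel)"
proof -
  define D where "D k = {\<delta> / 2 ^ Suc k <.. \<delta> / 2 ^ k}" for k :: nat
  have disjoint: "disjoint_family_on D {..K}"
    using disjoint_family_dyadic_intervals[OF \<open>0 < \<delta>\<close>] unfolding D_def disjoint_family_on_def by blast
  have pointwise: "(\<Sum>k\<le>K. entropy_weight (N (\<delta> / 2 ^ k)) * indicator (D k) e)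
      \<le> indicator {0..\<delta>} e * entropy_weight (N e)" for e
  proof (cases "\<exists>k\<le>K. e \<in> D k")
    case True
    then obtain k where "k \<le> K" and e: "\<delta> / 2 ^ Suc k < e" "e \<le> \<delta> / 2 ^ k"
      unfolding D_def by auto
    have "0 < \<delta> / 2 ^ Suc k" and "\<delta> / 2 ^ k \<le> \<delta>"
      using \<open>0 < \<delta>\<close> by (simp_all add: divide_le_eq one_le_power)
    then have "0 < e" and "e \<le> \<delta>"
      using e by linarith+
    moreover have "(\<Sum>k\<le>K. entropy_weight (N (\<delta> / 2 ^ k)) * indicator (D k) e) = entropy_weight (N (\<delta> / 2 ^ k))"
      using \<open>k \<le> K\<close> e by (intro sum_indicator_disjoint_family[OF disjoint]) (auto simp: D_def)
    ultimately show ?thesis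
      using e(2) by (simp add: entropy_weight_mono antimono)
  next
    case False
    then show ?thesis
      by (simp add: indicator_def)
  qed
  have "(\<Sum>k\<le>K. entropy_weight (N (\<delta> / 2 ^ k)) * ennreal (\<delta> / 2 ^ Suc k))
      = (\<Sum>k\<le>K. entropy_weight (N (\<delta> / 2 ^ k)) * emeasure lborel (D k))"
  proof (intro sum.cong refl)
    fix k
    have "\<delta> / 2 ^ Suc k \<le> \<delta> / 2 ^ k"
      using \<open>0 < \<delta>\<close> by (simp add: divide_le_eq)
    then have "emeasure lborel (D k) = ennreal (\<delta> / 2 ^ k - \<delta> / 2 ^ Suc k)"
      by (simp add: D_def)
    also have "\<delta> / 2 ^ k - \<delta> / 2 ^ Suc k = \<delta> / 2 ^ Suc k"
      by (simp add: field_simps)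
    finally show "entropy_weight (N (\<delta> / 2 ^ k)) * ennreal (\<delta> / 2 ^ Suc k)
        = entropy_weight (N (\<delta> / 2 ^ k)) * emeasure lborel (D k)"
      by simp
  qed
  also have "\<dots> = (\<integral>\<^sup>+e. (\<Sum>k\<le>K. entropy_weight (N (\<delta> / 2 ^ k)) * indicator (D k) e) \<partial>lborel)"
    by (subst nn_integral_sum) (auto simp: D_def nn_integral_cmult_indicator)
  also have "\<dots> \<le> (\<integral>\<^sup>+e. indicator {0..\<delta>} e * entropy_weight (N e) \<partial>lborel)"
    by (intro nn_integral_mono pointwise)
  finally show ?thesis .
qed

lemma dyadic_entropy_sum_le:
  fixes N :: "real \<Rightarrow> enat"
  assumes antimono: "\<And>a b. 0 < a \<Longrightarrow> a \<le> b \<Longrightarrow> N b \<le> N a" and "0 < \<delta>"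
    and J: "(\<integral>\<^sup>+e. indicator {0..\<delta>} e * entropy_weight (N e) \<partial>lborel) \<le> ennreal J"
  shows dyadic_values_finite: "N (\<delta> / 2 ^ k) \<noteq> \<infinity>"
    and "(\<Sum>k\<le>K. \<delta> / 2 ^ k * sqrt (1 + ln (the_enat (N (\<delta> / 2 ^ k))))) \<le> 2 * J"
proof -
  note dyadic_sum = order_trans[OF dyadic_sum_le_nn_integral[OF antimono \<open>0 < \<delta>\<close>] J]
  show finite: "N (\<delta> / 2 ^ k) \<noteq> \<infinity>" for k
  proof
    assume "N (\<delta> / 2 ^ k) = \<infinity>"
    then have "\<infinity> = entropy_weight (N (\<delta> / 2 ^ k)) * ennreal (\<delta> / 2 ^ Suc k)"
      using \<open>0 < \<delta>\<close> by (simp add: entropy_weight_def ennreal_top_mult)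
    also have "\<dots> \<le> (\<Sum>j\<le>k. entropy_weight (N (\<delta> / 2 ^ j)) * ennreal (\<delta> / 2 ^ Suc j))"
      by (rule member_le_sum) auto
    also have "\<dots> \<le> ennreal J"
      by (rule dyadic_sum)
    finally show False
      by (simp add: top_unique)
  qed
  define a where "a k = sqrt (1 + ln (the_enat (N (\<delta> / 2 ^ k))))" for k
  have a_ge_1: "1 \<le> a k" for k
    unfolding a_def by (cases "the_enat (N (\<delta> / 2 ^ k)) = 0") auto
  then have terms: "0 < a k * (\<delta> / 2 ^ Suc k)" for k
    using \<open>0 < \<delta>\<close> by (simp add: order_less_le_trans[OF zero_less_one])
  have "ennreal (a k * (\<delta> / 2 ^ Suc k)) = entropy_weight (N (\<delta> / 2 ^ k)) * ennreal (\<delta> / 2 ^ Suc k)" for k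
  proof -
    have "entropy_weight (N (\<delta> / 2 ^ k)) = ennreal (a k)"
      using finite[of k] unfolding entropy_weight_def a_def by (cases "N (\<delta> / 2 ^ k)") auto
    moreover have "ennreal (a k * (\<delta> / 2 ^ Suc k)) = ennreal (a k) * ennreal (\<delta> / 2 ^ Suc k)"
      by (rule ennreal_mult') (use a_ge_1[of k] in simp)
    ultimately show ?thesis
      by simp
  qed
  then have "ennreal (\<Sum>k\<le>K. a k * (\<delta> / 2 ^ Suc k)) \<le> ennreal J"
    using dyadic_sum[of K] terms by (subst sum_ennreal[symmetric]) (auto intro: less_imp_le)
  moreover have "0 < (\<Sum>k\<le>K. a k * (\<delta> / 2 ^ Suc k))"
    using terms by (intro sum_pos) auto
  ultimately have "(\<Sum>k\<le>K. a k * (\<delta> / 2 ^ Suc k)) \<le> J"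
    by (auto simp: ennreal_le_iff2)
  moreover have "(\<Sum>k\<le>K. \<delta> / 2 ^ k * a k) = 2 * (\<Sum>k\<le>K. a k * (\<delta> / 2 ^ Suc k))"
    by (simp add: sum_distrib_left field_simps)
  ultimately show "(\<Sum>k\<le>K. \<delta> / 2 ^ k * sqrt (1 + ln (the_enat (N (\<delta> / 2 ^ k))))) \<le> 2 * J"
    unfolding a_def by linarith
qed

lemma bracket_product_second_moment_le:
  fixes g h q :: "'v \<Rightarrow> real"
  assumes b: "eps_bracket P \<epsilon> b"
    and g: "\<forall>v\<in>space P. fst b v \<le> g v \<and> g v \<le> snd b v"
    and h: "\<forall>v\<in>space P. fst b v \<le> h v \<and> h v \<le> snd b v"
    and q: "AE v in P. \<bar>q v\<bar> \<le> B"
    and measurable: "(\<lambda>v. g v * q v - h v * q v) \<in> borel_measurable P"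
  shows "(\<integral>v. (g v * q v - h v * q v)\<^sup>2 \<partial>P) \<le> (B * \<epsilon>)\<^sup>2"
proof -
  define I where "I = (\<integral>v. (snd b v - fst b v)\<^sup>2 \<partial>P)"
  have width: "integrable P (\<lambda>v. (snd b v - fst b v)\<^sup>2)" and "sqrt I < \<epsilon>"
    using b L2_diff[of "snd b" P "fst b"] unfolding eps_bracket_def L2norm_def L2_def I_def by auto
  moreover have "0 \<le> I"
    unfolding I_def by (rule integral_nonneg_AE) auto
  ultimately have "(sqrt I)\<^sup>2 \<le> \<epsilon>\<^sup>2"
    by (intro power_mono) auto
  with \<open>0 \<le> I\<close> have width_moment: "I \<le> \<epsilon>\<^sup>2"
    by simp
  have pointwise: "AE v in P. (g v * q v - h v * q v)\<^sup>2 \<le> B\<^sup>2 * (snd b v - fst b v)\<^sup>2"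
    using q AE_space
  proof eventually_elim
    case (elim v)
    then have "fst b v \<le> g v" "g v \<le> snd b v" "fst b v \<le> h v" "h v \<le> snd b v"
      using g h by auto
    then have "\<bar>g v - h v\<bar> \<le> snd b v - fst b v"
      by (simp add: abs_le_iff)
    then have "\<bar>g v - h v\<bar> * \<bar>q v\<bar> \<le> (snd b v - fst b v) * B"
      using elim by (intro mult_mono) auto
    then have "\<bar>g v * q v - h v * q v\<bar> \<le> B * (snd b v - fst b v)"
      by (simp add: left_diff_distrib[symmetric] abs_mult mult.commute)
    then have "\<bar>g v * q v - h v * q v\<bar>\<^sup>2 \<le> (B * (snd b v - fst b v))\<^sup>2"
      by (intro power_mono) auto
    then show ?case
      by (simp add: power_mult_distrib)
  qed
  have "(\<integral>v. (g v * q v - h v * q v)\<^sup>2 \<partial>P) \<le> (\<integral>v. B\<^sup>2 * (snd b v - fst b v)\<^sup>2 \<partial>P)"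
    by (rule integral_mono_AE'[OF _ pointwise]) (use width in auto)
  also have "\<dots> = B\<^sup>2 * I"
    unfolding I_def by simp
  also have "\<dots> \<le> (B * \<epsilon>)\<^sup>2"
    using width_moment by (simp add: power_mult_distrib mult_left_mono)
  finally show ?thesis .
qed

lemma sqrt_two_ln_two_mult_le:
  fixes N n :: real
  assumes "2 \<le> N" and "1 \<le> n"
  shows "sqrt (2 * ln (2 * (N * n))) \<le> 2 * sqrt (ln N) * sqrt (1 + ln n)"
proof -
  have "ln 2 \<le> ln N" and "0 \<le> ln n"
    using assms by simp_all
  then have "0 \<le> (4 * ln N - 2) * ln n"
    using ln2_ge_two_thirds by (intro mult_nonneg_nonneg) auto
  moreover have "ln (2 * (N * n)) = ln 2 + ln N + ln n"
    using assms by (simp add: ln_mult)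
  ultimately have "2 * ln (2 * (N * n)) \<le> 4 * ln N * (1 + ln n)"
    using \<open>ln 2 \<le> ln N\<close> by (simp add: algebra_simps)
  then have "sqrt (2 * ln (2 * (N * n))) \<le> sqrt (4 * ln N * (1 + ln n))"
    by simp
  also have "\<dots> = 2 * sqrt (ln N) * sqrt (1 + ln n)"
    by (simp add: real_sqrt_mult real_sqrt_four)
  finally show ?thesis .
qed

lemma sqrt_two_ln_two_mult_mult_le:
  fixes N a b :: real
  assumes "2 \<le> N" and "1 \<le> a" and "1 \<le> b"
  shows "sqrt (2 * ln (2 * ((N * a) * (N * b)))) \<le> 3 * sqrt (ln N) * (sqrt (1 + ln a) + sqrt (1 + ln b))"
proof -
  define sa sb where "sa = sqrt (1 + ln a)" and "sb = sqrt (1 + ln b)"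
  have "ln 2 \<le> ln N" and "0 \<le> ln a" and "0 \<le> ln b"
    using assms by simp_all
  then have "0 \<le> (9 * ln N - 2) * ln a" and "0 \<le> (9 * ln N - 2) * ln b"
    using ln2_ge_two_thirds by (intro mult_nonneg_nonneg; simp)+
  moreover have "ln (2 * ((N * a) * (N * b))) = ln 2 + 2 * ln N + ln a + ln b"
    using assms by (simp add: ln_mult)
  ultimately have "2 * ln (2 * ((N * a) * (N * b))) \<le> 9 * ln N * ((1 + ln a) + (1 + ln b))"
    using \<open>ln 2 \<le> ln N\<close> ln2_ge_two_thirds by (simp add: algebra_simps)
  also have "(1 + ln a) + (1 + ln b) \<le> (sa + sb)\<^sup>2"
    unfolding sa_def sb_def power2_sum using \<open>0 \<le> ln a\<close> \<open>0 \<le> ln b\<close> by simp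
  then have "9 * ln N * ((1 + ln a) + (1 + ln b)) \<le> 9 * ln N * (sa + sb)\<^sup>2"
    using \<open>ln 2 \<le> ln N\<close> ln2_ge_two_thirds by (intro mult_left_mono) auto
  finally have "sqrt (2 * ln (2 * ((N * a) * (N * b)))) \<le> sqrt (9 * ln N * (sa + sb)\<^sup>2)"
    by simp
  also have "\<dots> = 3 * sqrt (ln N) * (sa + sb)"
    using \<open>0 \<le> ln a\<close> \<open>0 \<le> ln b\<close> by (simp add: sa_def sb_def real_sqrt_mult)
  finally show ?thesis
    unfolding sa_def sb_def .
qed

lemma chaining_increments_le_entropy_sum:
  fixes n :: "nat \<Rightarrow> real"
  assumes N: "2 \<le> N" and "0 \<le> B" and "0 < \<delta>" and n: "\<And>k. 1 \<le> n k"
  shows "(\<Sum>k<K. 2 * B * (\<delta> / 2 ^ k) * sqrt (2 * ln (2 * ((N * n (Suc k)) * (N * n k)))))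
    \<le> 18 * B * sqrt (ln N) * (\<Sum>k\<le>K. \<delta> / 2 ^ k * sqrt (1 + ln (n k)))"
proof -
  define L where "L = sqrt (ln N)"
  define e where "e k = \<delta> / 2 ^ k * sqrt (1 + ln (n k))" for k
  have e_nonneg: "0 \<le> e k" for k
    unfolding e_def using n[of k] \<open>0 < \<delta>\<close> by simp
  have "0 \<le> L"
    unfolding L_def using N by simp
  have "(\<Sum>k<K. 2 * B * (\<delta> / 2 ^ k) * sqrt (2 * ln (2 * ((N * n (Suc k)) * (N * n k)))))
      \<le> (\<Sum>k<K. 6 * B * L * (2 * e (Suc k) + e k))"
  proof (rule sum_mono)
    fix k
    have "2 * B * (\<delta> / 2 ^ k) * sqrt (2 * ln (2 * ((N * n (Suc k)) * (N * n k))))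
        \<le> 2 * B * (\<delta> / 2 ^ k) * (3 * L * (sqrt (1 + ln (n (Suc k))) + sqrt (1 + ln (n k))))"
      unfolding L_def using \<open>0 \<le> B\<close> \<open>0 < \<delta>\<close>
      by (intro mult_left_mono sqrt_two_ln_two_mult_mult_le N n) auto
    also have "\<dots> = 6 * B * L * (2 * e (Suc k) + e k)"
      by (simp add: e_def algebra_simps)
    finally show "2 * B * (\<delta> / 2 ^ k) * sqrt (2 * ln (2 * ((N * n (Suc k)) * (N * n k))))
        \<le> 6 * B * L * (2 * e (Suc k) + e k)" .
  qed
  also have "\<dots> = 6 * B * L * (\<Sum>k<K. 2 * e (Suc k) + e k)"
    by (rule sum_distrib_left[symmetric])
  also have "\<dots> = 6 * B * L * (2 * (\<Sum>k<K. e (Suc k)) + (\<Sum>k<K. e k))"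
    by (simp add: sum.distrib sum_distrib_left)
  also have "\<dots> \<le> 6 * B * L * (2 * (\<Sum>k\<le>K. e k) + (\<Sum>k\<le>K. e k))"
  proof (intro mult_left_mono add_mono)
    show "(\<Sum>k<K. e (Suc k)) \<le> (\<Sum>k\<le>K. e k)"
      unfolding sum.atMost_shift using e_nonneg[of 0] by simp
    show "(\<Sum>k<K. e k) \<le> (\<Sum>k\<le>K. e k)"
      using e_nonneg by (intro sum_mono2) auto
  qed (use \<open>0 \<le> B\<close> \<open>0 \<le> L\<close> in auto)
  finally show ?thesis
    by (simp add: L_def e_def)
qed

text \<open>Every term of the chaining bound is dominated by a term of the dyadic entropy sum, at the
  price of the factor \<open>sqrt (ln N)\<close> accounting for the \<open>N\<close> coordinates.\<close>
lemma chaining_bound_le_entropy_sum: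
  fixes n :: "nat \<Rightarrow> real"
  assumes N: "2 \<le> N" and "0 \<le> B" and "0 < \<delta>" and n: "\<And>k. 1 \<le> n k"
    and entropy: "(\<Sum>k\<le>K. \<delta> / 2 ^ k * sqrt (1 + ln (n k))) \<le> 2 * J"
    and tail: "z \<le> B * \<delta>"
  shows "B * \<delta> * sqrt (2 * ln (2 * (N * n 0)))
      + (\<Sum>k<K. 2 * B * (\<delta> / 2 ^ k) * sqrt (2 * ln (2 * ((N * n (Suc k)) * (N * n k))))) + z
    \<le> 44 * sqrt (ln N) * B * J"
proof -
  define L where "L = sqrt (ln N)"
  define S where "S = (\<Sum>k\<le>K. \<delta> / 2 ^ k * sqrt (1 + ln (n k)))"
  have "0 \<le> L"
    unfolding L_def using N by simp
  have "1 / 2 \<le> L"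
  proof -
    have "ln 2 \<le> ln N"
      using N by simp
    then have "1 / 4 \<le> ln N"
      using ln2_ge_two_thirds by linarith
    then have "sqrt (1 / 4) \<le> L"
      unfolding L_def by (rule real_sqrt_le_mono)
    then show ?thesis
      by (simp add: real_sqrt_divide)
  qed
  have "\<delta> / 2 ^ 0 * sqrt (1 + ln (n 0)) \<le> S"
    unfolding S_def using n \<open>0 < \<delta>\<close> by (intro member_le_sum) auto
  then have first_term: "\<delta> * sqrt (1 + ln (n 0)) \<le> S"
    by simp
  moreover have "\<delta> \<le> \<delta> * sqrt (1 + ln (n 0))"
    using n[of 0] \<open>0 < \<delta>\<close> by simp
  ultimately have "\<delta> \<le> S"
    by linarith
  have "B * \<delta> * sqrt (2 * ln (2 * (N * n 0))) \<le> B * \<delta> * (2 * L * sqrt (1 + ln (n 0)))"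
    unfolding L_def using \<open>0 \<le> B\<close> \<open>0 < \<delta>\<close> by (intro mult_left_mono sqrt_two_ln_two_mult_le N n) auto
  also have "\<dots> \<le> 2 * B * L * S"
    using first_term \<open>0 \<le> B\<close> \<open>0 \<le> L\<close> mult_left_mono[OF first_term, of "2 * B * L"] by (simp add: ac_simps)
  finally have first: "B * \<delta> * sqrt (2 * ln (2 * (N * n 0))) \<le> 2 * B * L * S" .
  have "0 \<le> B * S"
    using \<open>0 \<le> B\<close> \<open>\<delta> \<le> S\<close> \<open>0 < \<delta>\<close> by simp
  have "B * \<delta> \<le> B * S"
    using \<open>\<delta> \<le> S\<close> \<open>0 \<le> B\<close> by (rule mult_left_mono)
  also have "\<dots> \<le> B * S * (2 * L)"
    using mult_left_mono[of 1 "2 * L" "B * S"] \<open>1 / 2 \<le> L\<close> \<open>0 \<le> B * S\<close> by simp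
  finally have "z \<le> 2 * B * L * S"
    using tail by (simp add: ac_simps)
  moreover have "(\<Sum>k<K. 2 * B * (\<delta> / 2 ^ k) * sqrt (2 * ln (2 * ((N * n (Suc k)) * (N * n k)))))
      \<le> 18 * B * L * S"
    unfolding L_def S_def by (rule chaining_increments_le_entropy_sum[OF N \<open>0 \<le> B\<close> \<open>0 < \<delta>\<close> n])
  ultimately have "B * \<delta> * sqrt (2 * ln (2 * (N * n 0)))
      + (\<Sum>k<K. 2 * B * (\<delta> / 2 ^ k) * sqrt (2 * ln (2 * ((N * n (Suc k)) * (N * n k))))) + z
    \<le> 22 * B * L * S"
    using first by simp
  also have "\<dots> \<le> 22 * B * L * (2 * J)"
    using entropy \<open>0 \<le> B\<close> \<open>0 \<le> L\<close> by (intro mult_left_mono) (auto simp: S_def)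
  finally show ?thesis
    by (simp add: L_def ac_simps)
qed

lemma lr_norm_le_card_powr:
  fixes x :: "'i \<Rightarrow> real"
  assumes "finite A" and "0 < r" and bound: "\<And>a. a \<in> A \<Longrightarrow> \<bar>x a\<bar> \<le> M" and "0 \<le> M"
  shows "(\<Sum>a\<in>A. \<bar>x a\<bar> powr r) powr (1 / r) \<le> real (card A) powr (1 / r) * M"
proof -
  have "(\<Sum>a\<in>A. \<bar>x a\<bar> powr r) \<le> (\<Sum>a\<in>A. M powr r)"
    using bound \<open>0 < r\<close> by (intro sum_mono powr_mono2) auto
  then have "(\<Sum>a\<in>A. \<bar>x a\<bar> powr r) powr (1 / r) \<le> (real (card A) * M powr r) powr (1 / r)"
    using \<open>0 < r\<close> by (intro powr_mono2) (auto intro: sum_nonneg)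
  also have "\<dots> = real (card A) powr (1 / r) * M"
    using \<open>0 < r\<close> \<open>0 \<le> M\<close> by (simp add: powr_mult powr_powr)
  finally show ?thesis .
qed

text \<open>For fixed \<open>n\<close> and \<open>P\<close>: \<open>\<rho> j \<theta>\<close> and \<open>q j k\<close> are \<open>\<rho>\<^sub>j(\<cdot>, \<theta>)\<close> and
  \<open>q\<^sub>k\<^sub>,\<^sub>n\<^sub>,\<^sub>j(z\<^sub>j)\<close> as functions of \<open>v = (x, z)\<close>, \<open>J2\<close> is the set of pairs \<open>(j, k)\<close>,
  and \<open>basis_product ((j, k), \<theta>)\<close> is the \<open>(j, k)\<close> coordinate of \<open>\<rho>(\<cdot>, \<theta>) * q\<^sub>n\<^sup>k\<^sup>n\<close>.\<close>
locale bracketed_product_family =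
  fixes P :: "'v measure" and Q :: "'w measure" and W :: "('v \<Rightarrow> real) \<Rightarrow> 'w \<Rightarrow> real"
    and J2 :: "(nat \<times> nat) set" and T :: "'t set"
    and \<rho> :: "nat \<Rightarrow> 't \<Rightarrow> 'v \<Rightarrow> real" and q :: "nat \<Rightarrow> nat \<Rightarrow> 'v \<Rightarrow> real"
    and F :: "'v \<Rightarrow> real" and B :: real
  assumes prob_space_P: "prob_space P"
    and isonormal: "isonormal P Q W"
    and finite_J2: "finite J2" and finite_T: "finite T"
    and \<rho>_measurable: "\<And>j kk \<theta>. (j, kk) \<in> J2 \<Longrightarrow> \<theta> \<in> T \<Longrightarrow> \<rho> j \<theta> \<in> borel_measurable P"
    and q_measurable: "\<And>j kk. (j, kk) \<in> J2 \<Longrightarrow> q j kk \<in> borel_measurable P"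
    and q_bounded: "\<And>j kk. (j, kk) \<in> J2 \<Longrightarrow> AE v in P. \<bar>q j kk v\<bar> \<le> B"
    and B_nonneg: "0 \<le> B"
    and F_measurable: "F \<in> borel_measurable P"
    and envelope: "\<And>j kk \<theta> v. (j, kk) \<in> J2 \<Longrightarrow> \<theta> \<in> T \<Longrightarrow> \<bar>\<rho> j \<theta> v\<bar> \<le> F v"
    and F_square_finite: "(\<integral>\<^sup>+v. (F v)\<^sup>2 \<partial>P) < \<infinity>"
begin

definition basis_product :: "(nat \<times> nat) \<times> 't \<Rightarrow> 'v \<Rightarrow> real" where
  "basis_product s v = \<rho> (fst (fst s)) (snd s) v * q (fst (fst s)) (snd (fst s)) v"

lemma basis_product_simp: "basis_product ((j, kk), \<theta>) = (\<lambda>v. \<rho> j \<theta> v * q j kk v)"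
  by (simp add: basis_product_def fun_eq_iff)

lemma basis_product_measurable:
  assumes "s \<in> J2 \<times> T"
  shows "basis_product s \<in> borel_measurable P"
proof -
  obtain j kk \<theta> where "s = ((j, kk), \<theta>)" and "(j, kk) \<in> J2" and "\<theta> \<in> T"
    using assms by auto
  then show ?thesis
    using \<rho>_measurable q_measurable by (simp add: basis_product_simp borel_measurable_times)
qed

lemma basis_product_envelope:
  assumes "s \<in> J2 \<times> T"
  shows "AE v in P. (basis_product s v)\<^sup>2 \<le> B\<^sup>2 * (F v)\<^sup>2"
proof -
  obtain j kk \<theta> where s: "s = ((j, kk), \<theta>)" and "(j, kk) \<in> J2" and "\<theta> \<in> T"
    using assms by auto
  show ?thesis
    using q_bounded[OF \<open>(j, kk) \<in> J2\<close>]
  proof eventually_elim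
    case (elim v)
    have "\<bar>\<rho> j \<theta> v\<bar> \<le> F v"
      using envelope[OF \<open>(j, kk) \<in> J2\<close> \<open>\<theta> \<in> T\<close>] .
    then have "\<bar>\<rho> j \<theta> v * q j kk v\<bar> \<le> F v * B"
      unfolding abs_mult using elim by (intro mult_mono) (auto intro: order_trans[OF abs_ge_zero])
    then have "\<bar>\<rho> j \<theta> v * q j kk v\<bar>\<^sup>2 \<le> (F v * B)\<^sup>2"
      by (intro power_mono) auto
    then show ?case
      by (simp add: s basis_product_simp power_mult_distrib mult.commute)
  qed
qed

lemma F_square_integrable: "integrable P (\<lambda>v. (F v)\<^sup>2)"
  using F_measurable F_square_finite by (intro integrableI_nonneg) auto

lemma basis_product_L2:
  assumes "s \<in> J2 \<times> T"
  shows "basis_product s \<in> L2 P"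
proof -
  have "integrable P (\<lambda>v. (basis_product s v)\<^sup>2)"
  proof (rule Bochner_Integration.integrable_bound)
    show "integrable P (\<lambda>v. B\<^sup>2 * (F v)\<^sup>2)"
      using F_square_integrable by simp
    show "(\<lambda>v. (basis_product s v)\<^sup>2) \<in> borel_measurable P"
      using basis_product_measurable[OF assms] by measurable
    show "AE v in P. norm ((basis_product s v)\<^sup>2) \<le> norm (B\<^sup>2 * (F v)\<^sup>2)"
      using basis_product_envelope[OF assms] by eventually_elim simp
  qed
  then show ?thesis
    using basis_product_measurable[OF assms] unfolding L2_def by simp
qed

lemma basis_product_second_moment:
  assumes "s \<in> J2 \<times> T"
  shows "(\<integral>v. (basis_product s v)\<^sup>2 \<partial>P) \<le> (B * L2norm P F)\<^sup>2"
proof -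
  have "(\<integral>v. (basis_product s v)\<^sup>2 \<partial>P) \<le> (\<integral>v. B\<^sup>2 * (F v)\<^sup>2 \<partial>P)"
    by (rule integral_mono_AE'[OF _ basis_product_envelope[OF assms]]) (use F_square_integrable in auto)
  also have "\<dots> = (B * L2norm P F)\<^sup>2"
    by (simp add: L2norm_def power_mult_distrib integral_nonneg_AE)
  finally show ?thesis .
qed

lemma basis_product_gaussian:
  assumes "s \<in> J2 \<times> T"
  shows "\<exists>v. centered_gaussian Q (W (basis_product s)) v \<and> v \<le> (B * L2norm P F)\<^sup>2"
  using isonormal_gaussian[OF isonormal basis_product_L2[OF assms]]
    varP_le_second_moment[OF prob_space_P basis_product_L2[OF assms]] basis_product_second_moment[OF assms]
  by auto

lemma basis_product_increment_gaussian:
  assumes "s \<in> J2 \<times> T" and "s' \<in> J2 \<times> T"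
  shows "\<exists>v. centered_gaussian Q (\<lambda>w. W (basis_product s) w - W (basis_product s') w) v
    \<and> v \<le> (\<integral>v. (basis_product s v - basis_product s' v)\<^sup>2 \<partial>P)"
  using isonormal_diff_gaussian[OF isonormal basis_product_L2[OF assms(1)] basis_product_L2[OF assms(2)]]
    varP_le_second_moment[OF prob_space_P L2_diff[OF basis_product_L2[OF assms(1)] basis_product_L2[OF assms(2)]]]
  by blast

text \<open>Projection onto a finite net: \<open>\<theta>\<close> is replaced by a fixed representative of the
  bracket containing \<open>\<rho> j \<theta>\<close>; both lie in that bracket and \<open>q\<close> is bounded by \<open>B\<close>.\<close>
lemma bracket_projection:
  assumes "bracketing_number P \<epsilon> C = enat m"
    and cover: "\<And>j kk \<theta>. (j, kk) \<in> J2 \<Longrightarrow> \<theta> \<in> T \<Longrightarrow> \<rho> j \<theta> \<in> C"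
  obtains \<pi> where "\<And>s. s \<in> J2 \<times> T \<Longrightarrow> \<pi> s \<in> J2 \<times> T"
    and "\<And>s. s \<in> J2 \<times> T \<Longrightarrow> (\<integral>v. (basis_product s v - basis_product (\<pi> s) v)\<^sup>2 \<partial>P) \<le> (B * \<epsilon>)\<^sup>2"
    and "card (\<pi> ` (J2 \<times> T)) \<le> card J2 * m"
proof -
  obtain Bs where "finite Bs" and "card Bs = m" and brackets: "\<And>b. b \<in> Bs \<Longrightarrow> eps_bracket P \<epsilon> b"
    and covering: "\<And>f. f \<in> C \<Longrightarrow> \<exists>b\<in>Bs. \<forall>v\<in>space P. fst b v \<le> f v \<and> f v \<le> snd b v"
    using bracketing_number_enatE[OF assms(1)] by blast
  define inside where "inside f b \<longleftrightarrow> (\<forall>v\<in>space P. fst b v \<le> f v \<and> f v \<le> snd b v)"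
    for f :: "'v \<Rightarrow> real" and b
  define br where "br j \<theta> = (SOME b. b \<in> Bs \<and> inside (\<rho> j \<theta>) b)" for j \<theta>
  define rep where "rep j b = (SOME \<theta>. \<theta> \<in> T \<and> br j \<theta> = b)" for j b
  define \<pi> where "\<pi> s = (fst s, rep (fst (fst s)) (br (fst (fst s)) (snd s)))" for s :: "(nat \<times> nat) \<times> 't"
  have br: "br j \<theta> \<in> Bs \<and> inside (\<rho> j \<theta>) (br j \<theta>)" if "(j, kk) \<in> J2" and "\<theta> \<in> T" for j kk \<theta>
    unfolding br_def inside_def using covering[OF cover[OF that]] by (rule someI2_bex) blast
  have rep: "rep j (br j \<theta>) \<in> T \<and> br j (rep j (br j \<theta>)) = br j \<theta>" if "\<theta> \<in> T" for j \<theta>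
    unfolding rep_def using someI_ex[of "\<lambda>\<theta>'. \<theta>' \<in> T \<and> br j \<theta>' = br j \<theta>"] that by blast
  show ?thesis
  proof
    fix s
    assume "s \<in> J2 \<times> T"
    then obtain j kk \<theta> where s: "s = ((j, kk), \<theta>)" and jk: "(j, kk) \<in> J2" and "\<theta> \<in> T"
      by auto
    define \<theta>' where "\<theta>' = rep j (br j \<theta>)"
    have "\<theta>' \<in> T" and same: "br j \<theta>' = br j \<theta>"
      using rep[OF \<open>\<theta> \<in> T\<close>, of j] unfolding \<theta>'_def by auto
    then show "\<pi> s \<in> J2 \<times> T"
      using jk by (simp add: s \<pi>_def \<theta>'_def)
    have "(\<integral>v. (\<rho> j \<theta> v * q j kk v - \<rho> j \<theta>' v * q j kk v)\<^sup>2 \<partial>P) \<le> (B * \<epsilon>)\<^sup>2"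
    proof (rule bracket_product_second_moment_le[OF brackets _ _ q_bounded[OF jk]])
      show "br j \<theta> \<in> Bs" and "\<forall>v\<in>space P. fst (br j \<theta>) v \<le> \<rho> j \<theta> v \<and> \<rho> j \<theta> v \<le> snd (br j \<theta>) v"
        using br[OF jk \<open>\<theta> \<in> T\<close>] unfolding inside_def by auto
      show "\<forall>v\<in>space P. fst (br j \<theta>) v \<le> \<rho> j \<theta>' v \<and> \<rho> j \<theta>' v \<le> snd (br j \<theta>) v"
        using br[OF jk \<open>\<theta>' \<in> T\<close>] same unfolding inside_def by auto
      show "(\<lambda>v. \<rho> j \<theta> v * q j kk v - \<rho> j \<theta>' v * q j kk v) \<in> borel_measurable P"
        using \<rho>_measurable[OF jk \<open>\<theta> \<in> T\<close>] \<rho>_measurable[OF jk \<open>\<theta>' \<in> T\<close>] q_measurable[OF jk]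
        by measurable
    qed
    then show "(\<integral>v. (basis_product s v - basis_product (\<pi> s) v)\<^sup>2 \<partial>P) \<le> (B * \<epsilon>)\<^sup>2"
      by (simp add: s \<pi>_def \<theta>'_def basis_product_simp)
  next
    have "\<pi> ` (J2 \<times> T) \<subseteq> (\<lambda>(jk, b). (jk, rep (fst jk) b)) ` (J2 \<times> Bs)"
      using br by (force simp: \<pi>_def)
    then have "card (\<pi> ` (J2 \<times> T)) \<le> card ((\<lambda>(jk, b). (jk, rep (fst jk) b)) ` (J2 \<times> Bs))"
      using finite_J2 \<open>finite Bs\<close> by (intro card_mono) auto
    also have "\<dots> \<le> card (J2 \<times> Bs)"
      by (rule card_image_le) (use finite_J2 \<open>finite Bs\<close> in auto)
    finally show "card (\<pi> ` (J2 \<times> T)) \<le> card J2 * m"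
      using \<open>card Bs = m\<close> by (simp add: card_cartesian_product)
  qed
qed

lemma dyadic_projections:
  assumes "0 < L2norm P F"
    and cover: "\<And>j kk \<theta>. (j, kk) \<in> J2 \<Longrightarrow> \<theta> \<in> T \<Longrightarrow> \<rho> j \<theta> \<in> C"
    and entropy: "bracketing_integral P (L2norm P F) C \<le> ennreal J"
  obtains \<pi> :: "nat \<Rightarrow> (nat \<times> nat) \<times> 't \<Rightarrow> (nat \<times> nat) \<times> 't" and n :: "nat \<Rightarrow> nat"
  where "\<And>k s. s \<in> J2 \<times> T \<Longrightarrow> \<pi> k s \<in> J2 \<times> T"
    and "\<And>k s. s \<in> J2 \<times> T \<Longrightarrow>
      (\<integral>v. (basis_product s v - basis_product (\<pi> k s) v)\<^sup>2 \<partial>P) \<le> (B * (L2norm P F / 2 ^ k))\<^sup>2"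
    and "\<And>k. card (\<pi> k ` (J2 \<times> T)) \<le> card J2 * n k"
    and "\<And>K. (\<Sum>k\<le>K. L2norm P F / 2 ^ k * sqrt (1 + ln (n k))) \<le> 2 * J"
proof -
  define \<delta> where "\<delta> = L2norm P F"
  define N where "N e = bracketing_number P e C" for e
  define n where "n k = the_enat (N (\<delta> / 2 ^ k))" for k
  have antimono: "N b \<le> N a" if "0 < a" and "a \<le> b" for a b
    unfolding N_def using that(2) by (rule bracketing_number_antimono)
  have J: "(\<integral>\<^sup>+e. indicator {0..\<delta>} e * entropy_weight (N e) \<partial>lborel) \<le> ennreal J"
    using entropy unfolding bracketing_integral_eq N_def \<delta>_def .
  have N_enat: "N (\<delta> / 2 ^ k) = enat (n k)" for k
    using dyadic_values_finite[OF antimono _ J, of k] assms(1)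
    unfolding n_def \<delta>_def by (cases "N (L2norm P F / 2 ^ k)") auto
  have "\<exists>\<pi>. (\<forall>s\<in>J2 \<times> T. \<pi> s \<in> J2 \<times> T \<and>
      (\<integral>v. (basis_product s v - basis_product (\<pi> s) v)\<^sup>2 \<partial>P) \<le> (B * (\<delta> / 2 ^ k))\<^sup>2)
    \<and> card (\<pi> ` (J2 \<times> T)) \<le> card J2 * n k" for k
  proof (rule bracket_projection[OF N_enat[of k, unfolded N_def] cover])
    fix \<pi>
    assume "\<And>s. s \<in> J2 \<times> T \<Longrightarrow> \<pi> s \<in> J2 \<times> T"
      and "\<And>s. s \<in> J2 \<times> T \<Longrightarrow> (\<integral>v. (basis_product s v - basis_product (\<pi> s) v)\<^sup>2 \<partial>P) \<le> (B * (\<delta> / 2 ^ k))\<^sup>2"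
      and "card (\<pi> ` (J2 \<times> T)) \<le> card J2 * n k"
    then show ?thesis
      by (intro exI[of _ \<pi>]) auto
  qed
  then have "\<forall>k. \<exists>\<pi>. (\<forall>s\<in>J2 \<times> T. \<pi> s \<in> J2 \<times> T \<and>
      (\<integral>v. (basis_product s v - basis_product (\<pi> s) v)\<^sup>2 \<partial>P) \<le> (B * (\<delta> / 2 ^ k))\<^sup>2)
    \<and> card (\<pi> ` (J2 \<times> T)) \<le> card J2 * n k"
    by blast
  then obtain \<pi> where \<pi>: "\<forall>k. (\<forall>s\<in>J2 \<times> T. \<pi> k s \<in> J2 \<times> T \<and>
      (\<integral>v. (basis_product s v - basis_product (\<pi> k s) v)\<^sup>2 \<partial>P) \<le> (B * (\<delta> / 2 ^ k))\<^sup>2)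
    \<and> card (\<pi> k ` (J2 \<times> T)) \<le> card J2 * n k"
    by (rule choice[THEN exE])
  show ?thesis
  proof (rule that)
    show "(\<Sum>k\<le>K. L2norm P F / 2 ^ k * sqrt (1 + ln (n k))) \<le> 2 * J" for K
      using dyadic_entropy_sum_le(2)[OF antimono _ J] assms(1) unfolding n_def \<delta>_def by auto
    show "\<pi> k s \<in> J2 \<times> T" if "s \<in> J2 \<times> T" for k s
      using \<pi> that by blast
    show "(\<integral>v. (basis_product s v - basis_product (\<pi> k s) v)\<^sup>2 \<partial>P) \<le> (B * (L2norm P F / 2 ^ k))\<^sup>2"
      if "s \<in> J2 \<times> T" for k s
      using \<pi> that unfolding \<delta>_def by blast
    show "card (\<pi> k ` (J2 \<times> T)) \<le> card J2 * n k" for k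
      using \<pi> by blast
  qed
qed

lemma basis_product_link_second_moment:
  assumes "s \<in> J2 \<times> T" and "s1 \<in> J2 \<times> T" and "s2 \<in> J2 \<times> T"
    and "(\<integral>v. (basis_product s v - basis_product s1 v)\<^sup>2 \<partial>P) \<le> a\<^sup>2"
    and "(\<integral>v. (basis_product s v - basis_product s2 v)\<^sup>2 \<partial>P) \<le> b\<^sup>2"
  shows "(\<integral>v. (basis_product s1 v - basis_product s2 v)\<^sup>2 \<partial>P) \<le> 2 * a\<^sup>2 + 2 * b\<^sup>2"
proof -
  have "(\<integral>v. (basis_product s1 v - basis_product s2 v)\<^sup>2 \<partial>P)
      \<le> 2 * (\<integral>v. (basis_product s1 v - basis_product s v)\<^sup>2 \<partial>P)
        + 2 * (\<integral>v. (basis_product s v - basis_product s2 v)\<^sup>2 \<partial>P)"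
    using basis_product_L2 assms(1-3) by (intro second_moment_diff_le)
  then show ?thesis
    using assms(4,5) by (simp add: power2_commute)
qed

lemma nn_integral_Max_basis_product_degenerate:
  assumes "L2norm P F = 0" and "J2 \<times> T \<noteq> {}"
  shows "(\<integral>\<^sup>+w. Max ((\<lambda>s. \<bar>W (basis_product s) w\<bar>) ` (J2 \<times> T)) \<partial>Q) = 0"
proof -
  have "(\<integral>\<^sup>+w. Max ((\<lambda>s. \<bar>W (basis_product s) w\<bar>) ` (J2 \<times> T)) \<partial>Q)
      \<le> 0 * sqrt (2 * ln (2 * real (card ((\<lambda>s. W (basis_product s)) ` (J2 \<times> T)))))"
    using basis_product_gaussian assms finite_J2 finite_T
    by (intro nn_integral_Max_abs_gaussian_family_le[OF isonormal_prob_space[OF isonormal]]) auto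
  then show ?thesis
    by simp
qed

lemma nn_integral_Max_basis_product_le:
  assumes J2: "2 \<le> card J2" and "T \<noteq> {}"
    and cover: "\<And>j kk \<theta>. (j, kk) \<in> J2 \<Longrightarrow> \<theta> \<in> T \<Longrightarrow> \<rho> j \<theta> \<in> C"
    and entropy: "bracketing_integral P (L2norm P F) C \<le> ennreal J"
  shows "(\<integral>\<^sup>+w. Max ((\<lambda>s. \<bar>W (basis_product s) w\<bar>) ` (J2 \<times> T)) \<partial>Q)
    \<le> 44 * sqrt (ln (card J2)) * B * J"
proof (cases "L2norm P F = 0")
  case True
  have "J2 \<times> T \<noteq> {}"
    using J2 \<open>T \<noteq> {}\<close> by auto
  then show ?thesis
    using nn_integral_Max_basis_product_degenerate[OF True] by simp
next
  case False
  define \<delta> where "\<delta> = L2norm P F"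
  have "0 \<le> \<delta>"
    by (simp add: \<delta>_def L2norm_def)
  with False have "0 < \<delta>"
    by (simp add: \<delta>_def)
  have I: "finite (J2 \<times> T)" "J2 \<times> T \<noteq> {}"
    using J2 \<open>T \<noteq> {}\<close> finite_J2 finite_T by auto
  obtain \<pi> n where \<pi>_in: "\<And>k s. s \<in> J2 \<times> T \<Longrightarrow> \<pi> k s \<in> J2 \<times> T"
    and \<pi>_close: "\<And>k s. s \<in> J2 \<times> T \<Longrightarrow>
      (\<integral>v. (basis_product s v - basis_product (\<pi> k s) v)\<^sup>2 \<partial>P) \<le> (B * (\<delta> / 2 ^ k))\<^sup>2"
    and \<pi>_card: "\<And>k. card (\<pi> k ` (J2 \<times> T)) \<le> card J2 * n k"
    and entropy_sum: "\<And>K. (\<Sum>k\<le>K. \<delta> / 2 ^ k * sqrt (1 + ln (n k))) \<le> 2 * J"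
    by (rule dyadic_projections[OF _ cover entropy]) (use \<open>0 < \<delta>\<close> \<delta>_def in auto)
  have n_ge_1: "1 \<le> real (n k)" for k
  proof -
    have "1 \<le> card (\<pi> k ` (J2 \<times> T))"
      using I by (simp add: Suc_le_eq card_gt_0_iff)
    then show ?thesis
      using \<pi>_card[of k] by (cases "n k") auto
  qed
  obtain K :: nat where K: "sqrt (2 * ln (2 * real (card (J2 \<times> T)))) < 2 ^ K"
    using real_arch_pow[of 2] by auto
  have "(\<integral>\<^sup>+w. Max ((\<lambda>s. \<bar>W (basis_product s) w\<bar>) ` (J2 \<times> T)) \<partial>Q)
      \<le> B * \<delta> * sqrt (2 * ln (2 * (real (card J2) * n 0)))
        + (\<Sum>k<K. 2 * B * (\<delta> / 2 ^ k)
            * sqrt (2 * ln (2 * ((real (card J2) * n (Suc k)) * (real (card J2) * n k)))))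
        + B * (\<delta> / 2 ^ K) * sqrt (2 * ln (2 * real (card (J2 \<times> T))))"
  proof (rule nn_integral_Max_abs_chaining[OF isonormal_prob_space[OF isonormal] I,
        where \<pi> = \<pi> and m = "\<lambda>k. real (card J2) * n k"])
    show "\<exists>v. centered_gaussian Q (W (basis_product (\<pi> 0 s))) v \<and> v \<le> (B * \<delta>)\<^sup>2" if "s \<in> J2 \<times> T" for s
      using basis_product_gaussian \<pi>_in[OF that] unfolding \<delta>_def by blast
    show "\<exists>v. centered_gaussian Q (\<lambda>w. W (basis_product (\<pi> (Suc k) s)) w - W (basis_product (\<pi> k s)) w) v
        \<and> v \<le> (2 * B * (\<delta> / 2 ^ k))\<^sup>2" if "s \<in> J2 \<times> T" for k s
    proof -
      have "(\<integral>v. (basis_product (\<pi> (Suc k) s) v - basis_product (\<pi> k s) v)\<^sup>2 \<partial>P)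
          \<le> 2 * (B * (\<delta> / 2 ^ Suc k))\<^sup>2 + 2 * (B * (\<delta> / 2 ^ k))\<^sup>2"
        using \<pi>_in \<pi>_close that by (intro basis_product_link_second_moment)
      also have "\<dots> \<le> (2 * B * (\<delta> / 2 ^ k))\<^sup>2"
        by (simp add: power_mult_distrib field_simps)
      finally show ?thesis
        using basis_product_increment_gaussian \<pi>_in[OF that] by (meson order_trans)
    qed
    show "\<exists>v. centered_gaussian Q (\<lambda>w. W (basis_product s) w - W (basis_product (\<pi> K s)) w) v
        \<and> v \<le> (B * (\<delta> / 2 ^ K))\<^sup>2" if "s \<in> J2 \<times> T" for s
      using basis_product_increment_gaussian[of s "\<pi> K s"] \<pi>_in[OF that] \<pi>_close[OF that, of K] that
      by (meson order_trans)
    show "real (card (\<pi> k ` (J2 \<times> T))) \<le> real (card J2) * real (n k)" for k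
      using \<pi>_card[of k] by (simp flip: of_nat_mult)
  qed (use B_nonneg \<open>0 < \<delta>\<close> in auto)
  also have "\<dots> \<le> 44 * sqrt (ln (card J2)) * B * J"
  proof (rule ennreal_leI, rule chaining_bound_le_entropy_sum[where n = "\<lambda>k. real (n k)"])
    have "\<delta> / 2 ^ K * sqrt (2 * ln (2 * real (card (J2 \<times> T)))) \<le> \<delta>"
      using K \<open>0 < \<delta>\<close> mult_left_mono[of _ "2 ^ K" "\<delta> / 2 ^ K"] by simp
    then show "B * (\<delta> / 2 ^ K) * sqrt (2 * ln (2 * real (card (J2 \<times> T)))) \<le> B * \<delta>"
      using B_nonneg mult_left_mono by (metis mult.assoc)
  qed (use J2 B_nonneg \<open>0 < \<delta>\<close> n_ge_1 entropy_sum in auto)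
  finally show ?thesis .
qed

lemma nn_integral_Max_lr_norm_le:
  assumes "0 < r" and J2: "2 \<le> card J2" and "T \<noteq> {}"
    and cover: "\<And>j kk \<theta>. (j, kk) \<in> J2 \<Longrightarrow> \<theta> \<in> T \<Longrightarrow> \<rho> j \<theta> \<in> C"
    and entropy: "bracketing_integral P (L2norm P F) C \<le> ennreal J"
  shows "(\<integral>\<^sup>+w. Max ((\<lambda>\<theta>. (\<Sum>(j, kk)\<in>J2. \<bar>W (basis_product ((j, kk), \<theta>)) w\<bar> powr r) powr (1 / r)) ` T) \<partial>Q)
    \<le> 44 * real (card J2) powr (1 / r) * sqrt (ln (card J2)) * B * J"
proof -
  define M where "M w = Max ((\<lambda>s. \<bar>W (basis_product s) w\<bar>) ` (J2 \<times> T))" for w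
  have I: "finite (J2 \<times> T)" "J2 \<times> T \<noteq> {}"
    using J2 \<open>T \<noteq> {}\<close> finite_J2 finite_T by auto
  have M_measurable: "M \<in> borel_measurable Q"
    unfolding M_def using basis_product_gaussian centered_gaussian_measurable
    by (intro borel_measurable_Max[OF I(1)] borel_measurable_abs) blast
  have pointwise: "Max ((\<lambda>\<theta>. (\<Sum>(j, kk)\<in>J2. \<bar>W (basis_product ((j, kk), \<theta>)) w\<bar> powr r) powr (1 / r)) ` T)
      \<le> real (card J2) powr (1 / r) * M w" for w
  proof (subst Max_le_iff)
    show "\<forall>x\<in>(\<lambda>\<theta>. (\<Sum>(j, kk)\<in>J2. \<bar>W (basis_product ((j, kk), \<theta>)) w\<bar> powr r) powr (1 / r)) ` T.
        x \<le> real (card J2) powr (1 / r) * M w"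
    proof
      fix x
      assume "x \<in> (\<lambda>\<theta>. (\<Sum>(j, kk)\<in>J2. \<bar>W (basis_product ((j, kk), \<theta>)) w\<bar> powr r) powr (1 / r)) ` T"
      then obtain \<theta> where "\<theta> \<in> T" and x: "x = (\<Sum>s\<in>J2. \<bar>W (basis_product (s, \<theta>)) w\<bar> powr r) powr (1 / r)"
        by (auto simp: case_prod_beta)
      have "\<bar>W (basis_product (s, \<theta>)) w\<bar> \<le> M w" if "s \<in> J2" for s
        unfolding M_def using I that \<open>\<theta> \<in> T\<close> by (intro Max_ge) auto
      then show "x \<le> real (card J2) powr (1 / r) * M w"
        unfolding x using Max_abs_nonneg[OF I] by (intro lr_norm_le_card_powr finite_J2 \<open>0 < r\<close>) (auto simp: M_def)
    qed
  qed (use finite_T \<open>T \<noteq> {}\<close> in auto)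
  have "(\<integral>\<^sup>+w. Max ((\<lambda>\<theta>. (\<Sum>(j, kk)\<in>J2. \<bar>W (basis_product ((j, kk), \<theta>)) w\<bar> powr r) powr (1 / r)) ` T) \<partial>Q)
      \<le> (\<integral>\<^sup>+w. ennreal (real (card J2) powr (1 / r)) * M w \<partial>Q)"
    using pointwise by (intro nn_integral_mono) (simp add: ennreal_mult'[symmetric] ennreal_leI)
  also have "\<dots> = ennreal (real (card J2) powr (1 / r)) * (\<integral>\<^sup>+w. M w \<partial>Q)"
    using M_measurable by (simp add: nn_integral_cmult)
  also have "\<dots> \<le> ennreal (real (card J2) powr (1 / r)) * ennreal (44 * sqrt (ln (card J2)) * B * J)"
    unfolding M_def
    by (intro mult_left_mono nn_integral_Max_basis_product_le[OF J2 \<open>T \<noteq> {}\<close> cover entropy] zero_le)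
  also have "\<dots> = 44 * real (card J2) powr (1 / r) * sqrt (ln (card J2)) * B * J"
    by (simp add: ennreal_mult'[symmetric] ac_simps)
  finally show ?thesis .
qed

end

theorem lemmaC4:
  fixes PP :: "('x \<times> (nat \<Rightarrow> 'z)) measure set"
    and JJ :: nat
    and r :: real
    and \<Theta> :: "nat \<Rightarrow> 't set" and R :: "'t set"
    and \<rho> :: "nat \<Rightarrow> 'x \<Rightarrow> 't \<Rightarrow> real"
    and q :: "nat \<Rightarrow> nat \<Rightarrow> nat \<Rightarrow> 'z \<Rightarrow> real"
    and k :: "nat \<Rightarrow> nat \<Rightarrow> nat"
    and B :: "nat \<Rightarrow> real" and Jn :: "nat \<Rightarrow> real"
    and Fn :: "nat \<Rightarrow> 'x \<times> (nat \<Rightarrow> 'z) \<Rightarrow> real"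
    and \<Omega> :: "nat \<Rightarrow> ('x \<times> (nat \<Rightarrow> 'z)) measure \<Rightarrow> 'w measure"
    and W :: "nat \<Rightarrow> ('x \<times> (nat \<Rightarrow> 'z)) measure \<Rightarrow> (('x \<times> (nat \<Rightarrow> 'z)) \<Rightarrow> real) \<Rightarrow> 'w \<Rightarrow> real"
  assumes PP_prob: "\<forall>P\<in>PP. prob_space P"
    and r_ge: "r \<ge> 2"
    and kn_ge: "\<forall>n. (\<Sum>j\<in>{1..JJ}. k n j) \<ge> 2"
    and rho_meas: "\<forall>n P j \<theta>. P \<in> PP \<and> j \<in> {1..JJ} \<and> \<theta> \<in> \<Theta> n \<inter> R \<longrightarrow>
                     (\<lambda>v. \<rho> j (fst v) \<theta>) \<in> borel_measurable P"
    and q_meas: "\<forall>n P j kk. P \<in> PP \<and> j \<in> {1..JJ} \<and> kk \<in> {1..k n j} \<longrightarrow>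
                     (\<lambda>v. q n j kk (snd v j)) \<in> borel_measurable P"
    and a_B: "\<forall>n. B n \<ge> 1"
    and a_q: "\<forall>n P j kk. P \<in> PP \<and> j \<in> {1..JJ} \<and> kk \<in> {1..k n j} \<longrightarrow>
                 (AE v in P. \<bar>q n j kk (snd v j)\<bar> \<le> B n)"
    and b_env_meas: "\<forall>n P. P \<in> PP \<longrightarrow> Fn n \<in> borel_measurable P"
    and b_env: "\<forall>n j \<theta> v. j \<in> {1..JJ} \<and> \<theta> \<in> \<Theta> n \<inter> R \<longrightarrow> \<bar>\<rho> j (fst v) \<theta>\<bar> \<le> Fn n v"
    and b_env_L2: "\<forall>n. (SUP P\<in>PP. \<integral>\<^sup>+ v. ennreal ((Fn n v)^2) \<partial>P) < \<infinity>"
    and c_J: "\<forall>n. \<forall>P\<in>PP. bracketing_integral P (L2norm P (Fn n))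
                 {(\<lambda>v. \<rho> j (fst v) \<theta>) | j \<theta>. j \<in> {1..JJ} \<and> \<theta> \<in> \<Theta> n \<inter> R}
               \<le> ennreal (Jn n)"
    and W_iso: "\<forall>n. \<forall>P\<in>PP. isonormal P (\<Omega> n P) (W n P)"
  shows "\<exists>K0>0. \<forall>n. \<forall>P\<in>PP. \<forall>T. finite T \<and> T \<noteq> {} \<and> T \<subseteq> \<Theta> n \<inter> R \<longrightarrow>
           (\<integral>\<^sup>+ w. ennreal (Max ((\<lambda>\<theta>.
               (\<Sum>j\<in>{1..JJ}. \<Sum>kk\<in>{1..k n j}.
                  \<bar>W n P (\<lambda>v. \<rho> j (fst v) \<theta> * q n j kk (snd v j)) w\<bar> powr r) powr (1 / r)) ` T))
            \<partial>\<Omega> n P)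
           \<le> ennreal (K0 * real (\<Sum>j\<in>{1..JJ}. k n j) powr (1 / r)
                       * sqrt (ln (real (\<Sum>j\<in>{1..JJ}. k n j))) * B n * Jn n)"
proof (intro exI[of _ "44::real"] conjI allI ballI impI)
  fix n P T
  assume "P \<in> PP" and T: "finite T \<and> T \<noteq> {} \<and> T \<subseteq> \<Theta> n \<inter> R"
  define J2 where "J2 = Sigma {1..JJ} (\<lambda>j. {1..k n j})"
  have card_J2: "card J2 = (\<Sum>j\<in>{1..JJ}. k n j)"
    by (simp add: J2_def card_SigmaI)
  have "(\<integral>\<^sup>+v. (Fn n v)\<^sup>2 \<partial>P) \<le> (SUP P\<in>PP. \<integral>\<^sup>+v. (Fn n v)\<^sup>2 \<partial>P)"
    using \<open>P \<in> PP\<close> by (rule SUP_upper)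
  then have F_square_finite: "(\<integral>\<^sup>+v. (Fn n v)\<^sup>2 \<partial>P) < \<infinity>"
    using b_env_L2 by (simp add: le_less_trans)
  interpret bracketed_product_family P "\<Omega> n P" "W n P" J2 T "\<lambda>j \<theta> v. \<rho> j (fst v) \<theta>"
    "\<lambda>j kk v. q n j kk (snd v j)" "Fn n" "B n"
  proof (rule bracketed_product_family.intro)
    show "prob_space P" and "isonormal P (\<Omega> n P) (W n P)" and "Fn n \<in> borel_measurable P"
      using PP_prob W_iso b_env_meas \<open>P \<in> PP\<close> by blast+
    show "finite J2" and "finite T"
      using T by (simp_all add: J2_def)
    show "0 \<le> B n"
      using a_B[rule_format, of n] by linarith
    show "(\<lambda>v. \<rho> j (fst v) \<theta>) \<in> borel_measurable P" and "\<bar>\<rho> j (fst v) \<theta>\<bar> \<le> Fn n v"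
      if "(j, kk) \<in> J2" and "\<theta> \<in> T" for j kk \<theta> v
      using rho_meas b_env \<open>P \<in> PP\<close> that T unfolding J2_def by blast+
    show "(\<lambda>v. q n j kk (snd v j)) \<in> borel_measurable P" and "AE v in P. \<bar>q n j kk (snd v j)\<bar> \<le> B n"
      if "(j, kk) \<in> J2" for j kk
      using q_meas a_q \<open>P \<in> PP\<close> that unfolding J2_def by blast+
  qed (rule F_square_finite)
  have "(\<integral>\<^sup>+w. Max ((\<lambda>\<theta>. (\<Sum>j\<in>{1..JJ}. \<Sum>kk\<in>{1..k n j}.
        \<bar>W n P (\<lambda>v. \<rho> j (fst v) \<theta> * q n j kk (snd v j)) w\<bar> powr r) powr (1 / r)) ` T) \<partial>\<Omega> n P)
    = (\<integral>\<^sup>+w. Max ((\<lambda>\<theta>. (\<Sum>(j, kk)\<in>J2. \<bar>W n P (basis_product ((j, kk), \<theta>)) w\<bar> powr r) powr (1 / r)) ` T)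
        \<partial>\<Omega> n P)"
    by (simp add: J2_def sum.Sigma basis_product_simp)
  also have "\<dots> \<le> 44 * real (card J2) powr (1 / r) * sqrt (ln (card J2)) * B n * Jn n"
  proof (rule nn_integral_Max_lr_norm_le)
    show "(\<lambda>v. \<rho> j (fst v) \<theta>) \<in> {\<lambda>v. \<rho> j (fst v) \<theta> | j \<theta>. j \<in> {1..JJ} \<and> \<theta> \<in> \<Theta> n \<inter> R}"
      if "(j, kk) \<in> J2" and "\<theta> \<in> T" for j kk \<theta>
      using that T unfolding J2_def by blast
  qed (use r_ge kn_ge card_J2 T c_J \<open>P \<in> PP\<close> in auto)
  finally show "(\<integral>\<^sup>+w. Max ((\<lambda>\<theta>. (\<Sum>j\<in>{1..JJ}. \<Sum>kk\<in>{1..k n j}.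
        \<bar>W n P (\<lambda>v. \<rho> j (fst v) \<theta> * q n j kk (snd v j)) w\<bar> powr r) powr (1 / r)) ` T) \<partial>\<Omega> n P)
    \<le> ennreal (44 * real (\<Sum>j\<in>{1..JJ}. k n j) powr (1 / r)
      * sqrt (ln (real (\<Sum>j\<in>{1..JJ}. k n j))) * B n * Jn n)"
    by (simp only: card_J2)
qed simp

end
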